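(* Let Assumptions 1, 2 and 3 hold, and assume $f$ is uniformly convex on $X$ with parameters $\rho\ge2$ and $\mu(f)>0$ (so $f$ has a unique minimizer $x_*$ on $X$). Run SMD for $N-1$ iterations from $x_1=x_\omega$ with constant stepsizes $\gamma=\dfrac{D_{\omega,X}\sqrt{\mu(\omega)}}{\sqrt{2(M_2^2+L^2)}\sqrt N}$, and let $x^N=\frac1N\sum_{\tau=1}^Nx_\tau$, $g^N=\frac1N\sum_{\tau=1}^Ng(x_\tau,\xi_\tau)$. Then $$\mathbb E\big[|g^N-f(x_* )|\big]\le\frac{M_1+\frac{D_{\omega,X}}{\sqrt{\mu(\omega)}}\sqrt{2(M_2^2+L^2)}}{\sqrt N}\quad\text{and}\quad\mathbb E\big[\|x^N-x_*\|^\rho\big]\le\frac{D_{\omega,X}\sqrt{2(M_2^2+L^2)}}{\mu(f)\sqrt{\mu(\omega)}\sqrt N}.$$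
   Context: $f$ is uniformly convex on $X$ with parameters $\rho\ge2$, $\mu(f)>0$ if for all $t\in[0,1]$ and $x,y\in X$: $f(tx+(1-t)y)\le tf(x)+(1-t)f(y)-\frac{\mu(f)}2t(1-t)(t^{\rho-1}+(1-t)^{\rho-1})\|x-y\|^\rho$. Proximal setup: $E$ Euclidean space with norm $\|\cdot\|$, dual norm $\|\cdot\|_*$; $X$ nonempty closed bounded convex; $\omega:X\to\mathbb R$ convex continuous, continuous subgradient selection $\omega'$ on $X^o$, strongly convex with modulus $\mu(\omega)>0$ w.r.t. $\|\cdot\|$; $x_\omega=\arg\min_X\omega$; $D_{\omega,X}=\sqrt{2[\max_X\omega-\min_X\omega]}$; $\mathrm{Prox}_x(\zeta)=\arg\min_{y\in X}\{\omega(y)+y^\top(\zeta-\omega'(x))\}$. Problem: $f(x)=\mathbb E[g(x,\xi)]$, $g$ Borel, convex in $x$; $f$ convex Lipschitz on $X$; $\xi_1,\xi_2,\dots$ i.i.d.; oracle returns $g(x,\xi_t)$ and measurable $G(x,\xi_t)\in\partial_xg(x,\xi_t)$; $f'=\mathbb EG$, $\delta=g-f$, $\Delta=G-f'$. SMD: $x_{t+1}=\mathrm{Prox}_{x_t}(\gamma G(x_t,\xi_t))$. Assumption 1: $\|f'(x)\|_*\le L$ on $X$. Assumption 2: $f=\mathbb Eg$, $\mathbb EG(x,\xi)\in\partial f(x)$. Assumption 3: $\mathbb E\delta^2\le M_1^2$, $\mathbb E\|\Delta\|_*^2\le M_2^2$ on $X$. *)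

theory Defs
  imports "HOL-Probability.Probability"
begin

definition is_norm :: "('a::euclidean_space \<Rightarrow> real) \<Rightarrow> bool" where
  "is_norm nrm \<longleftrightarrow> (\<forall>x. nrm x \<ge> 0) \<and> (\<forall>x. nrm x = 0 \<longleftrightarrow> x = 0)
     \<and> (\<forall>x y. nrm (x + y) \<le> nrm x + nrm y) \<and> (\<forall>c x. nrm (c *\<^sub>R x) = \<bar>c\<bar> * nrm x)"

definition dual_norm :: "('a::euclidean_space \<Rightarrow> real) \<Rightarrow> 'a \<Rightarrow> real" where
  "dual_norm nrm z = Sup {z \<bullet> y | y. nrm y \<le> 1}"

definition unif_convex_on ::
  "'a::euclidean_space set \<Rightarrow> ('a \<Rightarrow> real) \<Rightarrow> ('a \<Rightarrow> real) \<Rightarrow> real \<Rightarrow> real \<Rightarrow> bool" where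
  "unif_convex_on X nrm f \<rho> \<mu> \<longleftrightarrow>
     (\<forall>t\<in>{0..1}. \<forall>x\<in>X. \<forall>y\<in>X.
        f (t *\<^sub>R x + (1 - t) *\<^sub>R y) \<le> t * f x + (1 - t) * f y
          - \<mu> / 2 * t * (1 - t) * (t powr (\<rho> - 1) + (1 - t) powr (\<rho> - 1)) * nrm (x - y) powr \<rho>)"

definition strongly_convex_on ::
  "'a::euclidean_space set \<Rightarrow> ('a \<Rightarrow> real) \<Rightarrow> ('a \<Rightarrow> real) \<Rightarrow> real \<Rightarrow> bool" where
  "strongly_convex_on X nrm f \<mu> \<longleftrightarrow>
     (\<forall>t\<in>{0..1}. \<forall>x\<in>X. \<forall>y\<in>X.
        f (t *\<^sub>R x + (1 - t) *\<^sub>R y) \<le> t * f x + (1 - t) * f y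
          - \<mu> / 2 * t * (1 - t) * (nrm (x - y))\<^sup>2)"

definition is_subgrad :: "'a::euclidean_space set \<Rightarrow> ('a \<Rightarrow> real) \<Rightarrow> 'a \<Rightarrow> 'a \<Rightarrow> bool" where
  "is_subgrad X f x s \<longleftrightarrow> (\<forall>y\<in>X. f y \<ge> f x + s \<bullet> (y - x))"

definition subdiff_dom :: "'a::euclidean_space set \<Rightarrow> ('a \<Rightarrow> real) \<Rightarrow> 'a set" where
  "subdiff_dom X \<omega> = {x \<in> X. \<exists>s. is_subgrad X \<omega> x s}"

definition prox ::
  "'a::euclidean_space set \<Rightarrow> ('a \<Rightarrow> real) \<Rightarrow> ('a \<Rightarrow> 'a) \<Rightarrow> 'a \<Rightarrow> 'a \<Rightarrow> 'a" where
  "prox X \<omega> \<omega>' x \<zeta> = (SOME y. y \<in> X \<and>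
      (\<forall>z\<in>X. \<omega> y + y \<bullet> (\<zeta> - \<omega>' x) \<le> \<omega> z + z \<bullet> (\<zeta> - \<omega>' x)))"

text \<open>SMD iterates: smd ... k w is x_{k+1}; x_1 = x1, x_{t+1} = Prox_{x_t}(gamma G(x_t, xi_t)).\<close>
primrec smd ::
  "'a::euclidean_space set \<Rightarrow> ('a \<Rightarrow> real) \<Rightarrow> ('a \<Rightarrow> 'a) \<Rightarrow> real \<Rightarrow> ('a \<Rightarrow> 'b \<Rightarrow> 'a)
    \<Rightarrow> 'a \<Rightarrow> (nat \<Rightarrow> 'w \<Rightarrow> 'b) \<Rightarrow> nat \<Rightarrow> 'w \<Rightarrow> 'a" where
  "smd X \<omega> \<omega>' \<gamma> G x1 \<xi> 0 w = x1"
| "smd X \<omega> \<omega>' \<gamma> G x1 \<xi> (Suc k) w =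
     prox X \<omega> \<omega>' (smd X \<omega> \<omega>' \<gamma> G x1 \<xi> k w)
       (\<gamma> *\<^sub>R G (smd X \<omega> \<omega>' \<gamma> G x1 \<xi> k w) (\<xi> (Suc k) w))"

end

theory Submission
  imports Defs
begin

text \<open>
  For the Bregman distance V of \<omega>, the three-point inequality of the prox-mapping
  turns one SMD step into
    \<gamma> G(x_k, \<xi>_{k+1}) \<bullet> (x_k - x_*) \<le> V(x_k, x_*) - V(x_{k+1}, x_*) + \<gamma>^2 \<parallel>G\<parallel>_*^2 / (2 \<mu>(\<omega>)).
  Telescoping, and using that G - f' has conditional mean zero given the past, gives
    E \<Sum>_k f'(x_k) \<bullet> (x_k - x_*) \<le> D^2 / (2 \<gamma>) + \<gamma> N (M_2^2 + L^2) / \<mu>(\<omega>),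
  which the chosen stepsize makes at most N R with R = D \<surd>(2 (M_2^2 + L^2)) / \<surd>(\<mu>(\<omega>) N).
  Each summand dominates both f(x_k) - f(x_*) (convexity) and \<mu>(f) \<parallel>x_k - x_*\<parallel>^\<rho>
  (uniform convexity), so Jensen's inequality for t^\<rho> gives the second bound. For
  the first, the value noise g(x_k, \<xi>_{k+1}) - f(x_k) is a martingale difference
  sequence, so its sum has second moment at most N M_1^2.

  Only on the set X^o of points carrying a subgradient is \<omega>' a subgradient, so the
  three-point inequality needs that \<omega>'(x) dominates every subgradient of \<omega> at x in
  directions into X. This follows from continuity of \<omega>' and density of X^o in X:
  minimisers of \<omega> + k/2 \<parallel>\<cdot> - w\<parallel>^2 lie in X^o and tend to w as k \<rightarrow> \<infinity>.
\<close>

lemma le_diff_tendsto_at_right_0: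
  fixes a b c0 :: real and c :: "real \<Rightarrow> real"
  assumes "\<And>t. 0 < t \<Longrightarrow> t < 1 \<Longrightarrow> a \<le> b - c t"
    and "(c \<longlongrightarrow> c0) (at_right 0)"
  shows "a \<le> b - c0"
proof (rule tendsto_le[of "at_right (0::real)" "\<lambda>t. b - c t" "b - c0" "\<lambda>_. a" a])
  show "at_right (0::real) \<noteq> bot" by simp
  show "((\<lambda>t. b - c t) \<longlongrightarrow> b - c0) (at_right 0)" using assms(2) by (intro tendsto_intros)
  show "((\<lambda>_. a) \<longlongrightarrow> a) (at_right 0)" by simp
  show "\<forall>\<^sub>F t in at_right 0. a \<le> b - c t"
    by (rule eventually_at_rightI[of 0 1]) (use assms(1) in auto)
qed

lemma unif_convex_subgrad_ineq:
  assumes X: "convex X" and f: "unif_convex_on X nrm f \<rho> \<mu>" and \<rho>: "\<rho> > 1"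
    and x: "x \<in> X" and y: "y \<in> X" and s: "is_subgrad X f x s"
  shows "f x + s \<bullet> (y - x) + \<mu> / 2 * nrm (y - x) powr \<rho> \<le> f y"
proof -
  let ?n = "nrm (y - x) powr \<rho>"
  define c where "c t = \<mu> / 2 * (1 - t) * (t powr (\<rho> - 1) + (1 - t) powr (\<rho> - 1)) * ?n" for t
  have "s \<bullet> (y - x) \<le> (f y - f x) - c t" if t: "0 < t" "t < 1" for t
  proof -
    let ?p = "t *\<^sub>R y + (1 - t) *\<^sub>R x"
    have "?p \<in> X" using X x y t by (simp add: convex_def)
    then have "f x + t * (s \<bullet> (y - x)) \<le> f ?p"
      using s unfolding is_subgrad_def by (auto simp: algebra_simps)
    also have "f ?p \<le> t * f y + (1 - t) * f x - t * c t"
    proof -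
      have "f ?p \<le> t * f y + (1 - t) * f x
          - \<mu> / 2 * t * (1 - t) * (t powr (\<rho> - 1) + (1 - t) powr (\<rho> - 1)) * ?n"
        using f t x y unfolding unif_convex_on_def by simp
      then show ?thesis by (simp add: c_def mult_ac)
    qed
    finally have "t * (s \<bullet> (y - x)) \<le> t * ((f y - f x) - c t)" by (simp add: algebra_simps)
    then show ?thesis using t by simp
  qed
  moreover have "(c \<longlongrightarrow> \<mu> / 2 * ?n) (at_right 0)"
  proof -
    have "\<forall>\<^sub>F t in at_right 0. 0 \<le> (t::real)" by (rule eventually_at_rightI[of 0 1]) auto
    then have "(c \<longlongrightarrow> \<mu> / 2 * (1 - 0) * (0 powr (\<rho> - 1) + (1 - 0) powr (\<rho> - 1)) * ?n) (at_right 0)"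
      unfolding c_def using \<rho> by (intro tendsto_intros) auto
    then show ?thesis using \<rho> by simp
  qed
  ultimately have "s \<bullet> (y - x) \<le> (f y - f x) - \<mu> / 2 * ?n" by (rule le_diff_tendsto_at_right_0)
  then show ?thesis by simp
qed

lemma strongly_convex_imp_unif_convex:
  assumes "strongly_convex_on X nrm f \<mu>" "\<And>x. nrm x \<ge> 0"
  shows "unif_convex_on X nrm f 2 \<mu>"
  using assms unfolding strongly_convex_on_def unif_convex_on_def by simp

lemma power2_norm_add: "norm (a + b)^2 = norm (a::'a::real_inner)^2 + 2 * (a \<bullet> b) + norm b^2"
  by (simp add: power2_norm_eq_inner inner_add_left inner_add_right inner_commute)

lemma young_quadratic: "(d::real) * n - m / 2 * n^2 \<le> d^2 / (2 * m)" if "m > 0" for d n m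
proof -
  have "0 \<le> (d - m * n)^2 / (2 * m)" using that by simp
  then show ?thesis using that by (simp add: power2_eq_square field_simps)
qed

lemma quadratic_penalty_first_order:
  fixes vq vz vp dq dp ip nz k t :: real
  assumes "vq + k / 2 * dq \<le> vp + k / 2 * dp" "vp \<le> t * vz + (1 - t) * vq"
    "dp = dq + 2 * t * ip + t^2 * nz" "t > 0"
  shows "0 \<le> (vz - vq) + k * ip + k / 2 * t * nz"
proof -
  have "t * ((vz - vq) + k * ip + k / 2 * t * nz) = (t * vz + (1 - t) * vq + k / 2 * dp) - (vq + k / 2 * dq)"
    using assms(3) by (simp add: algebra_simps power2_eq_square)
  also have "\<dots> \<ge> 0" using assms(1,2) by linarith
  finally show ?thesis using assms(4) by (simp add: zero_le_mult_iff)
qed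

lemma convex_on_powr_nonneg: assumes "p \<ge> 1" shows "convex_on {0..} (\<lambda>x::real. x powr p)"
proof (rule convex_onI)
  show "convex {0::real..}" by simp
  fix t x y :: real assume t: "0 < t" "t < 1" and x: "x \<in> {0..}" and y: "y \<in> {0..}"
  have tp: "s powr p \<le> s" if "0 \<le> s" "s \<le> 1" for s :: real
  proof (cases "s = 0")
    case False
    then have "s powr p \<le> s powr 1" using that assms by (intro powr_mono') auto
    then show ?thesis using that False by simp
  qed (use assms in simp)
  show "((1 - t) *\<^sub>R x + t *\<^sub>R y) powr p \<le> (1 - t) * x powr p + t * y powr p"
  proof (cases "x = 0 \<or> y = 0")
    case True
    then show ?thesis
    proof
      assume x0: "x = 0"
      have "(t * y) powr p = t powr p * y powr p" using t y by (simp add: powr_mult)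
      also have "\<dots> \<le> t * y powr p" using tp[of t] t by (intro mult_right_mono) auto
      finally show ?thesis using x0 assms by simp
    next
      assume y0: "y = 0"
      have "((1 - t) * x) powr p = (1 - t) powr p * x powr p" using t x by (simp add: powr_mult)
      also have "\<dots> \<le> (1 - t) * x powr p" using tp[of "1 - t"] t by (intro mult_right_mono) auto
      finally show ?thesis using y0 assms by simp
    qed
  next
    case False
    then have "x \<in> {0<..}" "y \<in> {0<..}" using x y by auto
    from convex_onD[OF powr_convex[OF assms], of t x y] t this show ?thesis by simp
  qed
qed

lemma powr_average_le:
  fixes r :: "nat \<Rightarrow> real"
  assumes "N \<ge> 1" "\<And>k. k < N \<Longrightarrow> r k \<ge> 0" "p \<ge> 1"
  shows "((1 / real N) * (\<Sum>k<N. r k)) powr p \<le> (1 / real N) * (\<Sum>k<N. r k powr p)"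
proof -
  have "0 \<in> {..<N}" using assms(1) by simp
  then have ne: "{..<N} \<noteq> {}" by blast
  have "(\<Sum>k<N. (1 / real N) *\<^sub>R r k) powr p \<le> (\<Sum>k<N. (1 / real N) * (r k) powr p)"
    by (rule convex_on_sum[OF _ ne convex_on_powr_nonneg[OF assms(3)]]) (use assms in auto)
  then show ?thesis by (simp add: sum_distrib_left)
qed

lemma stepsize_balance:
  fixes a b c d :: real
  assumes "a > 0" "b > 0" "c > 0" "d > 0"
  shows "d\<^sup>2 / 2 / (d * c / (a * b)) + d * c / (a * b) * b\<^sup>2 * (a\<^sup>2 / 2) / c\<^sup>2 = b\<^sup>2 * (d * a / (c * b))"
  using assms by (simp add: field_simps power2_eq_square)

lemma (in prob_space) integrable_of_nn_second_moment:
  fixes u :: "'a \<Rightarrow> real"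
  assumes u: "u \<in> borel_measurable M" and bound: "(\<integral>\<^sup>+w. ennreal ((u w)\<^sup>2) \<partial>M) \<le> ennreal c"
  shows "integrable M (\<lambda>w. (u w)\<^sup>2)" "integrable M u"
proof -
  show sq: "integrable M (\<lambda>w. (u w)\<^sup>2)"
    using u bound by (intro integrableI_bounded) (auto simp: order_le_less_trans)
  show "integrable M u" by (rule square_integrable_imp_integrable[OF u sq])
qed

lemma (in prob_space) expectation_abs_squared_le:
  fixes u :: "'a \<Rightarrow> real"
  assumes "integrable M u" "integrable M (\<lambda>w. (u w)\<^sup>2)"
  shows "(\<integral>w. \<bar>u w\<bar> \<partial>M)\<^sup>2 \<le> (\<integral>w. (u w)\<^sup>2 \<partial>M)"
proof -
  have "0 \<le> variance (\<lambda>w. \<bar>u w\<bar>)" by simp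
  also have "\<dots> = (\<integral>w. \<bar>u w\<bar>\<^sup>2 \<partial>M) - (\<integral>w. \<bar>u w\<bar> \<partial>M)\<^sup>2"
    using assms by (intro variance_eq) auto
  finally show ?thesis by simp
qed

lemma borel_measurable_continuous_on_comp:
  assumes "\<phi> \<in> borel_measurable N" "\<And>x. x \<in> space N \<Longrightarrow> \<phi> x \<in> S" "continuous_on S \<psi>"
  shows "(\<lambda>x. \<psi> (\<phi> x)) \<in> borel_measurable N"
proof -
  have "\<phi> \<in> measurable N (restrict_space borel S)"
    by (rule measurable_restrict_space2) (use assms in auto)
  moreover have "\<psi> \<in> borel_measurable (restrict_space borel S)"
    by (rule borel_measurable_continuous_on_restrict[OF assms(3)])
  ultimately show ?thesis using measurable_comp[of \<phi> N "restrict_space borel S" \<psi> borel]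
    by (simp add: comp_def)
qed

section \<open>Norms and dual norms\<close>

locale abstract_norm =
  fixes nrm :: "'a::euclidean_space \<Rightarrow> real"
  assumes is_norm_nrm: "is_norm nrm"
begin

lemma nrm_nonneg[simp]: "nrm x \<ge> 0" using is_norm_nrm unfolding is_norm_def by auto

lemma nrm_eq_0_iff[simp]: "nrm x = 0 \<longleftrightarrow> x = 0" using is_norm_nrm unfolding is_norm_def by auto

lemma nrm_triangle: "nrm (x + y) \<le> nrm x + nrm y" using is_norm_nrm unfolding is_norm_def by auto

lemma nrm_scaleR: "nrm (c *\<^sub>R x) = \<bar>c\<bar> * nrm x" using is_norm_nrm unfolding is_norm_def by auto

lemma nrm_0[simp]: "nrm 0 = 0" by simp

lemma nrm_minus: "nrm (- x) = nrm x" using nrm_scaleR[of "-1" x] by simp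

lemma nrm_minus_commute: "nrm (x - y) = nrm (y - x)" using nrm_minus[of "x - y"] by simp

lemma nrm_sum_le: "finite S \<Longrightarrow> nrm (sum f S) \<le> (\<Sum>i\<in>S. nrm (f i))"
proof (induction S rule: finite_induct)
  case empty then show ?case using nrm_eq_0_iff[of 0] by simp
next
  case (insert x F) then show ?case using nrm_triangle[of "f x" "sum f F"] by simp
qed

lemma nrm_le_mult_norm: "\<exists>C\<ge>0. \<forall>x. nrm x \<le> C * norm x"
proof (intro exI[of _ "\<Sum>b\<in>Basis. nrm b"] conjI allI)
  show "0 \<le> (\<Sum>b\<in>Basis. nrm b)" by (simp add: sum_nonneg)
  fix x :: 'a
  have "nrm x = nrm (\<Sum>b\<in>Basis. (x \<bullet> b) *\<^sub>R b)" by (simp add: euclidean_representation)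
  also have "\<dots> \<le> (\<Sum>b\<in>Basis. nrm ((x \<bullet> b) *\<^sub>R b))" by (rule nrm_sum_le) simp
  also have "\<dots> = (\<Sum>b\<in>Basis. \<bar>x \<bullet> b\<bar> * nrm b)" by (simp add: nrm_scaleR)
  also have "\<dots> \<le> (\<Sum>b\<in>Basis. norm x * nrm b)"
    by (intro sum_mono mult_right_mono) (auto simp: Basis_le_norm)
  also have "\<dots> = (\<Sum>b\<in>Basis. nrm b) * norm x" by (simp add: sum_distrib_left mult.commute)
  finally show "nrm x \<le> (\<Sum>b\<in>Basis. nrm b) * norm x" .
qed

lemma continuous_on_nrm: "continuous_on S nrm"
proof -
  obtain C where C: "C \<ge> 0" "\<And>x. nrm x \<le> C * norm x" using nrm_le_mult_norm by blast
  have "C-lipschitz_on S nrm"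
  proof (rule lipschitz_onI)
    fix x y
    have "nrm x \<le> nrm y + nrm (x - y)" using nrm_triangle[of y "x - y"] by simp
    moreover have "nrm y \<le> nrm x + nrm (y - x)" using nrm_triangle[of x "y - x"] by simp
    moreover have "nrm (x - y) \<le> C * dist x y" "nrm (y - x) \<le> C * dist x y"
      using C(2)[of "x - y"] C(2)[of "y - x"] by (auto simp: dist_norm norm_minus_commute)
    ultimately show "dist (nrm x) (nrm y) \<le> C * dist x y" by (simp add: dist_real_def abs_le_iff)
  qed (use C in auto)
  then show ?thesis by (rule lipschitz_on_continuous_on)
qed

lemma mult_norm_le_nrm: "\<exists>c>0. \<forall>x. c * norm x \<le> nrm x"
proof -
  have "compact (sphere (0::'a) 1)" by simp
  moreover have "sphere (0::'a) 1 \<noteq> {}" by simp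
  ultimately have "\<exists>x0\<in>sphere 0 1. \<forall>y\<in>sphere 0 1. nrm x0 \<le> nrm y"
    by (rule continuous_attains_inf[OF _ _ continuous_on_nrm])
  then obtain x0 where x0: "x0 \<in> sphere 0 1" "\<And>y. y \<in> sphere 0 1 \<Longrightarrow> nrm x0 \<le> nrm y"
    by blast
  have "x0 \<noteq> 0" using x0(1) by auto
  then have pos: "nrm x0 > 0" using nrm_nonneg[of x0] nrm_eq_0_iff[of x0] by linarith
  show ?thesis
  proof (intro exI[of _ "nrm x0"] conjI allI pos)
    fix x :: 'a
    show "nrm x0 * norm x \<le> nrm x"
    proof (cases "x = 0")
      case False
      have "nrm x0 \<le> nrm ((1 / norm x) *\<^sub>R x)" using x0(2)[of "(1 / norm x) *\<^sub>R x"] False by simp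
      also have "\<dots> = nrm x / norm x" by (simp add: nrm_scaleR)
      finally show ?thesis using False by (simp add: field_simps)
    qed simp
  qed
qed

definition "nrm_lower_const = (SOME c. c > 0 \<and> (\<forall>x. c * norm x \<le> nrm x))"

lemma nrm_lower_const: "nrm_lower_const > 0" "nrm_lower_const * norm x \<le> nrm x"
  using someI_ex[OF mult_norm_le_nrm] unfolding nrm_lower_const_def[symmetric] by auto

abbreviation "dn \<equiv> dual_norm nrm"

lemma inner_le_norm_div_lower_const: "nrm y \<le> 1 \<Longrightarrow> z \<bullet> y \<le> norm z / nrm_lower_const"
proof -
  assume y: "nrm y \<le> 1"
  have "norm y \<le> 1 / nrm_lower_const"
    using nrm_lower_const(2)[of y] y nrm_lower_const(1) by (simp add: field_simps)
  have "z \<bullet> y \<le> norm z * norm y" by (rule norm_cauchy_schwarz)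
  also have "\<dots> \<le> norm z * (1 / nrm_lower_const)"
    using \<open>norm y \<le> 1 / nrm_lower_const\<close> by (rule mult_left_mono) simp
  finally have "z \<bullet> y \<le> norm z * (1 / nrm_lower_const)" .
  then show ?thesis by simp
qed

lemma dual_norm_bdd_above: "bdd_above {z \<bullet> y | y. nrm y \<le> 1}"
  unfolding bdd_above_def by (intro exI[of _ "norm z / nrm_lower_const"]) (auto intro: inner_le_norm_div_lower_const)

lemma inner_le_dual_norm: "nrm y \<le> 1 \<Longrightarrow> z \<bullet> y \<le> dn z"
  unfolding dual_norm_def by (rule cSup_upper[OF _ dual_norm_bdd_above]) auto

lemma dual_norm_nonneg: "dn z \<ge> 0" using inner_le_dual_norm[of 0 z] by simp

lemma dual_norm_least: "(\<And>y. nrm y \<le> 1 \<Longrightarrow> z \<bullet> y \<le> B) \<Longrightarrow> dn z \<le> B"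
proof -
  assume h: "\<And>y. nrm y \<le> 1 \<Longrightarrow> z \<bullet> y \<le> B"
  have "0 \<in> {z \<bullet> y | y. nrm y \<le> 1}" by (intro CollectI exI[of _ 0]) simp
  then have ne: "{z \<bullet> y | y. nrm y \<le> 1} \<noteq> {}" by blast
  show ?thesis unfolding dual_norm_def by (rule cSup_least[OF ne]) (use h in auto)
qed

lemma inner_le_dual_norm_mult: "z \<bullet> y \<le> dn z * nrm y"
proof (cases "y = 0")
  case False
  then have p: "nrm y > 0" using nrm_nonneg[of y] nrm_eq_0_iff[of y] by linarith
  have "z \<bullet> ((1 / nrm y) *\<^sub>R y) \<le> dn z" by (rule inner_le_dual_norm) (use p in \<open>simp add: nrm_scaleR\<close>)
  then show ?thesis using p by (simp add: field_simps)
qed (simp add: dual_norm_nonneg)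

lemma abs_inner_le_dual_norm_mult: "\<bar>z \<bullet> y\<bar> \<le> dn z * nrm y"
  using inner_le_dual_norm_mult[of z y] inner_le_dual_norm_mult[of z "-y"] by (simp add: nrm_minus abs_le_iff)

lemma dual_norm_triangle: "dn (a + b) \<le> dn a + dn b"
proof (rule dual_norm_least)
  fix y assume "nrm y \<le> 1"
  then have "a \<bullet> y \<le> dn a" "b \<bullet> y \<le> dn b" by (auto intro: inner_le_dual_norm)
  then show "(a + b) \<bullet> y \<le> dn a + dn b" by (simp add: inner_add_left)
qed

lemma dual_norm_minus: "dn (- a) = dn a"
proof -
  have "dn (- a) \<le> dn a" for a
  proof (rule dual_norm_least)
    fix y assume "nrm y \<le> 1"
    then have "nrm (-y) \<le> 1" by (simp add: nrm_minus)
    then have "a \<bullet> (-y) \<le> dn a" by (rule inner_le_dual_norm)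
    then show "(-a) \<bullet> y \<le> dn a" by simp
  qed
  from this[of a] this[of "-a"] show ?thesis by simp
qed

lemma dual_norm_le_norm_div: "dn z \<le> norm z / nrm_lower_const"
  by (rule dual_norm_least) (rule inner_le_norm_div_lower_const)

lemma dual_norm_lipschitz: "\<bar>dn a - dn b\<bar> \<le> norm (a - b) / nrm_lower_const"
proof -
  have "dn a \<le> dn (a - b) + dn b" using dual_norm_triangle[of "a - b" b] by simp
  moreover have "dn b \<le> dn (b - a) + dn a" using dual_norm_triangle[of "b - a" a] by simp
  moreover have "dn (b - a) = dn (a - b)" using dual_norm_minus[of "a - b"] by simp
  moreover have "dn (a - b) \<le> norm (a - b) / nrm_lower_const" by (rule dual_norm_le_norm_div)
  ultimately show ?thesis by linarith
qed

lemma continuous_on_dual_norm: "continuous_on S dn"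
proof -
  have "(1 / nrm_lower_const)-lipschitz_on S dn"
    by (rule lipschitz_onI) (use dual_norm_lipschitz nrm_lower_const(1) in \<open>auto simp: dist_norm dist_real_def\<close>)
  then show ?thesis by (rule lipschitz_on_continuous_on)
qed

lemma borel_measurable_dual_norm[measurable]: "dn \<in> borel_measurable borel"
  by (rule borel_measurable_continuous_onI[OF continuous_on_dual_norm])

lemma dual_norm_scaleR: assumes "c \<ge> 0" shows "dn (c *\<^sub>R z) = c * dn z"
proof (cases "c = 0")
  case True
  have "dn 0 \<le> 0" by (rule dual_norm_least) simp
  with dual_norm_nonneg[of 0] True show ?thesis by simp
next
  case False
  with assms have c: "c > 0" by simp
  have a: "dn (c *\<^sub>R z) \<le> c * dn z"
  proof (rule dual_norm_least)
    fix y assume "nrm y \<le> 1"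
    then have "z \<bullet> y \<le> dn z" by (rule inner_le_dual_norm)
    then show "(c *\<^sub>R z) \<bullet> y \<le> c * dn z" using c by simp
  qed
  have "dn z \<le> (1 / c) * dn (c *\<^sub>R z)"
  proof (rule dual_norm_least)
    fix y assume "nrm y \<le> 1"
    then have "(c *\<^sub>R z) \<bullet> y \<le> dn (c *\<^sub>R z)" by (rule inner_le_dual_norm)
    then show "z \<bullet> y \<le> (1 / c) * dn (c *\<^sub>R z)" using c by (simp add: field_simps)
  qed
  then have "c * dn z \<le> dn (c *\<^sub>R z)" using c by (simp add: field_simps)
  with a show ?thesis by simp
qed

lemma unif_convex_minimizer_ineq:
  assumes X: "convex X" and f: "unif_convex_on X nrm f \<rho> \<mu>" and \<rho>: "\<rho> > 1"
    and x: "x \<in> X" and xs: "xs \<in> X" "\<forall>y\<in>X. f xs \<le> f y"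
    and s: "is_subgrad X f x s"
  shows "\<mu> * nrm (x - xs) powr \<rho> \<le> s \<bullet> (x - xs)"
proof -
  have "is_subgrad X f xs 0" using xs unfolding is_subgrad_def by simp
  from unif_convex_subgrad_ineq[OF X f \<rho> xs(1) x this]
  have "f xs + \<mu> / 2 * nrm (x - xs) powr \<rho> \<le> f x" by simp
  moreover have "f x + s \<bullet> (xs - x) + \<mu> / 2 * nrm (x - xs) powr \<rho> \<le> f xs"
    using unif_convex_subgrad_ineq[OF X f \<rho> x xs(1) s] nrm_minus_commute[of xs x] by simp
  moreover have "s \<bullet> (xs - x) = - (s \<bullet> (x - xs))" by (simp add: inner_diff_right)
  ultimately show ?thesis by linarith
qed

end

section \<open>The prox-mapping\<close>

locale prox_setup = abstract_norm nrm for nrm :: "'a::euclidean_space \<Rightarrow> real" +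
  fixes X :: "'a set" and \<omega> :: "'a \<Rightarrow> real" and \<omega>' :: "'a \<Rightarrow> 'a" and \<mu> :: real
  assumes X: "X \<noteq> {}" "closed X" "bounded X" "convex X"
  and \<omega>_conv: "convex_on X \<omega>" and \<omega>_cont: "continuous_on X \<omega>"
  and \<omega>'_sub: "\<forall>x\<in>subdiff_dom X \<omega>. is_subgrad X \<omega> x (\<omega>' x)"
  and \<omega>'_cont: "continuous_on (subdiff_dom X \<omega>) \<omega>'"
  and \<mu>_pos: "\<mu> > 0" and \<omega>_strong: "strongly_convex_on X nrm \<omega> \<mu>"
begin

lemma compact_X: "compact X" using X by (simp add: compact_eq_bounded_closed)

lemma subdiff_domD: "x \<in> subdiff_dom X \<omega> \<Longrightarrow> x \<in> X" by (simp add: subdiff_dom_def)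

lemma linear_tilt_argmin_exists: "\<exists>y\<in>X. \<forall>z\<in>X. \<omega> y + y \<bullet> v \<le> \<omega> z + z \<bullet> v"
proof -
  have "continuous_on X (\<lambda>y. \<omega> y + y \<bullet> v)" by (intro continuous_intros \<omega>_cont)
  from continuous_attains_inf[OF compact_X X(1) this] show ?thesis .
qed

definition "tilt_argmin v = (SOME y. y \<in> X \<and> (\<forall>z\<in>X. \<omega> y + y \<bullet> v \<le> \<omega> z + z \<bullet> v))"

lemma tilt_argmin:
  "tilt_argmin v \<in> X" "\<And>z. z \<in> X \<Longrightarrow> \<omega> (tilt_argmin v) + tilt_argmin v \<bullet> v \<le> \<omega> z + z \<bullet> v"
  using someI_ex[OF linear_tilt_argmin_exists[unfolded Bex_def]]
  unfolding tilt_argmin_def[symmetric] by auto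

lemma prox_eq_tilt_argmin: "prox X \<omega> \<omega>' x \<zeta> = tilt_argmin (\<zeta> - \<omega>' x)"
  by (simp add: prox_def tilt_argmin_def)

lemma tilt_argmin_subgrad: "is_subgrad X \<omega> (tilt_argmin v) (- v)"
  unfolding is_subgrad_def
proof
  fix z assume "z \<in> X"
  have h: "\<omega> (tilt_argmin v) + tilt_argmin v \<bullet> v \<le> \<omega> z + z \<bullet> v" by (rule tilt_argmin(2)) fact
  have "- v \<bullet> (z - tilt_argmin v) = tilt_argmin v \<bullet> v - z \<bullet> v" by (simp add: inner_diff_right inner_commute)
  with h show "\<omega> (tilt_argmin v) + - v \<bullet> (z - tilt_argmin v) \<le> \<omega> z" by linarith
qed

lemma tilt_argmin_subdiff_dom: "tilt_argmin v \<in> subdiff_dom X \<omega>"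
  using tilt_argmin(1) tilt_argmin_subgrad unfolding subdiff_dom_def by blast

lemma strongly_convex_subgrad_ineq:
  assumes x: "x \<in> X" and s: "is_subgrad X \<omega> x s" and u: "u \<in> X"
  shows "\<omega> x + s \<bullet> (u - x) + \<mu> / 2 * (nrm (u - x))\<^sup>2 \<le> \<omega> u"
  using unif_convex_subgrad_ineq[OF X(4) strongly_convex_imp_unif_convex[OF \<omega>_strong nrm_nonneg] _ x u s]
  by simp

text \<open>Although \<open>prox\<close> is defined by choice, strong convexity makes the minimiser unique and
  Lipschitz in the tilt; this continuity is what makes the SMD iterates measurable.\<close>

lemma tilt_argmin_lipschitz: "\<mu> * nrm (tilt_argmin v1 - tilt_argmin v2) \<le> dn (v2 - v1)"
proof -
  let ?y1 = "tilt_argmin v1" and ?y2 = "tilt_argmin v2"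
  let ?n = "nrm (?y1 - ?y2)"
  have a0: "\<omega> ?y1 + (-v1) \<bullet> (?y2 - ?y1) + \<mu> / 2 * (nrm (?y2 - ?y1))\<^sup>2 \<le> \<omega> ?y2"
    by (rule strongly_convex_subgrad_ineq[OF tilt_argmin(1) tilt_argmin_subgrad tilt_argmin(1)])
  have a: "\<omega> ?y1 + (-v1) \<bullet> (?y2 - ?y1) + \<mu> / 2 * ?n\<^sup>2 \<le> \<omega> ?y2"
    using a0 nrm_minus_commute[of ?y2 ?y1] by simp
  have b: "\<omega> ?y2 + (-v2) \<bullet> (?y1 - ?y2) + \<mu> / 2 * ?n\<^sup>2 \<le> \<omega> ?y1"
    by (rule strongly_convex_subgrad_ineq[OF tilt_argmin(1) tilt_argmin_subgrad tilt_argmin(1)])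
  have "(-v1) \<bullet> (?y2 - ?y1) + (-v2) \<bullet> (?y1 - ?y2) = (v2 - v1) \<bullet> (?y2 - ?y1)"
    by (simp add: algebra_simps)
  with a b have "\<mu> * ?n\<^sup>2 \<le> (v2 - v1) \<bullet> (?y1 - ?y2)"
    by (simp add: algebra_simps)
  also have "\<dots> \<le> dn (v2 - v1) * ?n" by (rule inner_le_dual_norm_mult)
  finally have c: "\<mu> * ?n * ?n \<le> dn (v2 - v1) * ?n" by (simp add: power2_eq_square mult.assoc)
  show ?thesis
  proof (cases "?n = 0")
    case True then show ?thesis using dual_norm_nonneg by simp
  next
    case False then have "?n > 0" using nrm_nonneg by (metis less_eq_real_def)
    with c show ?thesis by simp
  qed
qed

lemma continuous_on_tilt_argmin: "continuous_on S tilt_argmin"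
proof -
  have "(1 / (nrm_lower_const * nrm_lower_const * \<mu>))-lipschitz_on S tilt_argmin"
  proof (rule lipschitz_onI)
    fix v1 v2
    have "nrm_lower_const * norm (tilt_argmin v1 - tilt_argmin v2) \<le> nrm (tilt_argmin v1 - tilt_argmin v2)"
      by (rule nrm_lower_const)
    also have "\<dots> \<le> dn (v2 - v1) / \<mu>" using tilt_argmin_lipschitz \<mu>_pos by (simp add: field_simps)
    also have "\<dots> \<le> norm (v2 - v1) / nrm_lower_const / \<mu>"
      using divide_right_mono[OF dual_norm_le_norm_div[of "v2 - v1"], of \<mu>] \<mu>_pos by simp
    finally have "norm (tilt_argmin v1 - tilt_argmin v2) \<le> norm (v2 - v1) / (nrm_lower_const * nrm_lower_const * \<mu>)"
      using nrm_lower_const(1) \<mu>_pos by (simp add: field_simps)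
    then show "dist (tilt_argmin v1) (tilt_argmin v2) \<le> 1 / (nrm_lower_const * nrm_lower_const * \<mu>) * dist v1 v2"
      by (simp add: dist_norm norm_minus_commute)
  qed (use nrm_lower_const(1) \<mu>_pos in simp)
  then show ?thesis by (rule lipschitz_on_continuous_on)
qed

lemma \<omega>_bounded: "\<exists>B\<ge>0. \<forall>x\<in>X. \<bar>\<omega> x\<bar> \<le> B"
proof -
  have "bounded (\<omega> ` X)" by (rule compact_imp_bounded[OF compact_continuous_image[OF \<omega>_cont compact_X]])
  then obtain B where "\<forall>x\<in>X. norm (\<omega> x) \<le> B" by (auto simp: bounded_iff)
  moreover have "B \<ge> 0"
  proof -
    obtain x where "x \<in> X" using X(1) by blast
    then show ?thesis using calculation norm_ge_zero[of "\<omega> x"] by (meson order_trans)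
  qed
  ultimately show ?thesis by auto
qed

lemma penalized_minimizer_subgrad:
  assumes q: "q \<in> X"
    and min: "\<And>z. z \<in> X \<Longrightarrow> \<omega> q + k / 2 * (norm (q - w))^2 \<le> \<omega> z + k / 2 * (norm (z - w))^2"
  shows "is_subgrad X \<omega> q (k *\<^sub>R (w - q))"
  unfolding is_subgrad_def
proof
  fix z assume z: "z \<in> X"
  have "\<omega> q + (k *\<^sub>R (w - q)) \<bullet> (z - q) \<le> \<omega> z - (- (k / 2 * t * (norm (z - q))^2))"
    if t: "0 < t" "t < 1" for t
  proof -
    let ?p = "t *\<^sub>R z + (1 - t) *\<^sub>R q"
    have p: "?p \<in> X" using X(4) z q t by (simp add: convex_def)
    have pw: "?p - w = (q - w) + t *\<^sub>R (z - q)" by (simp add: algebra_simps)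
    have "(norm (?p - w))^2 = (norm (q - w))^2 + 2 * t * ((q - w) \<bullet> (z - q)) + t^2 * (norm (z - q))^2"
      unfolding pw power2_norm_add by (simp add: power_mult_distrib)
    moreover have "\<omega> ?p \<le> t * \<omega> z + (1 - t) * \<omega> q"
      using \<omega>_conv t z q unfolding convex_on_def by auto
    ultimately have "0 \<le> (\<omega> z - \<omega> q) + k * ((q - w) \<bullet> (z - q)) + k / 2 * t * (norm (z - q))^2"
      using min[OF p] t(1) by (intro quadratic_penalty_first_order)
    moreover have "(k *\<^sub>R (w - q)) \<bullet> (z - q) = - (k * ((q - w) \<bullet> (z - q)))"
      by (simp add: inner_diff_left algebra_simps)
    ultimately show ?thesis by linarith
  qed
  moreover have "((\<lambda>t. - (k / 2 * t * (norm (z - q))^2)) \<longlongrightarrow> - (k / 2 * 0 * (norm (z - q))^2)) (at_right 0)"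
    by (intro tendsto_intros)
  ultimately have "\<omega> q + (k *\<^sub>R (w - q)) \<bullet> (z - q) \<le> \<omega> z - (- (k / 2 * 0 * (norm (z - q))^2))"
    by (rule le_diff_tendsto_at_right_0)
  then show "\<omega> q + (k *\<^sub>R (w - q)) \<bullet> (z - q) \<le> \<omega> z" by simp
qed

lemma subdiff_dom_dense:
  assumes w: "w \<in> X" and e: "e > 0"
  shows "\<exists>q\<in>subdiff_dom X \<omega>. norm (q - w) \<le> e"
proof -
  obtain B where B: "B \<ge> 0" "\<And>x. x \<in> X \<Longrightarrow> \<bar>\<omega> x\<bar> \<le> B" using \<omega>_bounded by blast
  define k where "k = (4 * B + 1) / e^2"
  have k: "k > 0" using B e by (simp add: k_def)
  have "continuous_on X (\<lambda>y. \<omega> y + k / 2 * (norm (y - w))^2)" by (intro continuous_intros \<omega>_cont)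
  from continuous_attains_inf[OF compact_X X(1) this] obtain q where
    q: "q \<in> X" "\<And>z. z \<in> X \<Longrightarrow> \<omega> q + k / 2 * (norm (q - w))^2 \<le> \<omega> z + k / 2 * (norm (z - w))^2"
    by blast
  then have q_dom: "q \<in> subdiff_dom X \<omega>"
    using penalized_minimizer_subgrad unfolding subdiff_dom_def by blast
  have "k / 2 * (norm (q - w))^2 \<le> 2 * B"
    using q(2)[OF w] B(2)[OF w] B(2)[OF q(1)] by simp
  then have "(norm (q - w))^2 \<le> 4 * B * e^2 / (4 * B + 1)" using k e B by (simp add: k_def field_simps)
  also have "\<dots> \<le> e^2" using e B by (simp add: field_simps)
  finally have "norm (q - w) \<le> e" using e by (simp add: power2_le_iff_abs_le)
  with q_dom show ?thesis by blast
qed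

lemma subdiff_dom_approach:
  assumes x: "x \<in> X" and u: "u \<in> X"
  obtains q :: "nat \<Rightarrow> 'a" and l :: "nat \<Rightarrow> real"
  where "\<And>n. q n \<in> subdiff_dom X \<omega>" "\<And>n. l n > 0" "q \<longlonglongrightarrow> x"
    "(\<lambda>n. (1 / l n) *\<^sub>R (q n - x)) \<longlonglongrightarrow> u - x"
proof -
  define l :: "nat \<Rightarrow> real" where "l n = 1 / (real n + 1)" for n
  have lpos: "l n > 0" and l1: "l n \<le> 1" for n by (simp_all add: l_def)
  have "l = (\<lambda>n. inverse (real (Suc n)))" by (simp add: l_def fun_eq_iff inverse_eq_divide add.commute)
  then have l0: "l \<longlonglongrightarrow> 0" using LIMSEQ_inverse_real_of_nat by simp
  define w where "w n = x + l n *\<^sub>R (u - x)" for n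
  have "w n \<in> X" for n
  proof -
    have "w n = l n *\<^sub>R u + (1 - l n) *\<^sub>R x" by (simp add: w_def algebra_simps)
    then show ?thesis using X(4) x u lpos[of n] l1[of n] by (simp add: convex_def)
  qed
  then have "\<exists>q\<in>subdiff_dom X \<omega>. norm (q - w n) \<le> (l n)\<^sup>2" for n
    by (rule subdiff_dom_dense) (use lpos[of n] in simp)
  then obtain q where q: "\<And>n. q n \<in> subdiff_dom X \<omega>" "\<And>n. norm (q n - w n) \<le> (l n)\<^sup>2"
    by metis
  define d where "d n = (1 / l n) *\<^sub>R (q n - x)" for n
  have "(\<lambda>n. (1 / l n) *\<^sub>R (q n - w n)) \<longlonglongrightarrow> 0"
  proof (rule Lim_null_comparison[OF _ l0], intro always_eventually allI)
    fix n
    have "norm ((1 / l n) *\<^sub>R (q n - w n)) = norm (q n - w n) / l n" using lpos[of n] by simp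
    also have "\<dots> \<le> (l n)\<^sup>2 / l n" using q(2)[of n] lpos[of n] by (simp add: divide_right_mono)
    also have "\<dots> = l n" using lpos[of n] by (simp add: power2_eq_square)
    finally show "norm ((1 / l n) *\<^sub>R (q n - w n)) \<le> l n" .
  qed
  moreover have "d = (\<lambda>n. (u - x) + (1 / l n) *\<^sub>R (q n - w n))"
    using lpos by (simp add: fun_eq_iff d_def w_def algebra_simps less_imp_neq[symmetric])
  ultimately have dlim: "d \<longlonglongrightarrow> u - x"
    using tendsto_add[OF tendsto_const[of "u - x"]] by fastforce
  have "q = (\<lambda>n. x + l n *\<^sub>R d n)" using lpos by (simp add: fun_eq_iff d_def less_imp_neq[symmetric])
  moreover have "(\<lambda>n. x + l n *\<^sub>R d n) \<longlonglongrightarrow> x + 0 *\<^sub>R (u - x)" by (intro tendsto_intros l0 dlim)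
  ultimately have "q \<longlonglongrightarrow> x" by simp
  from that[OF q(1) lpos this dlim[unfolded d_def]] show ?thesis .
qed

lemma subgrad_inner_le_selection:
  assumes x: "x \<in> subdiff_dom X \<omega>" and s: "is_subgrad X \<omega> x s" and u: "u \<in> X"
  shows "s \<bullet> (u - x) \<le> \<omega>' x \<bullet> (u - x)"
proof -
  have xX: "x \<in> X" using x by (rule subdiff_domD)
  obtain q l where q: "\<And>n. q n \<in> subdiff_dom X \<omega>" and l: "\<And>n. l n > 0" and qlim: "q \<longlonglongrightarrow> x"
    and dlim: "(\<lambda>n. (1 / l n) *\<^sub>R (q n - x)) \<longlonglongrightarrow> u - x"
    using subdiff_dom_approach[OF xX u] by blast
  have mono: "0 \<le> (\<omega>' (q n) - s) \<bullet> ((1 / l n) *\<^sub>R (q n - x))" for n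
  proof -
    have "\<omega> (q n) + \<omega>' (q n) \<bullet> (x - q n) \<le> \<omega> x"
      using \<omega>'_sub q[of n] xX unfolding is_subgrad_def by blast
    moreover have "\<omega> x + s \<bullet> (q n - x) \<le> \<omega> (q n)"
      using s subdiff_domD[OF q] unfolding is_subgrad_def by blast
    ultimately have "0 \<le> (\<omega>' (q n) - s) \<bullet> (q n - x)"
      by (simp add: algebra_simps inner_diff_left inner_diff_right)
    then show ?thesis using l[of n] by simp
  qed
  have "(\<lambda>n. \<omega>' (q n)) \<longlonglongrightarrow> \<omega>' x"
    by (rule continuous_on_tendsto_compose[OF \<omega>'_cont qlim x]) (use q in simp)
  then have "(\<lambda>n. (\<omega>' (q n) - s) \<bullet> ((1 / l n) *\<^sub>R (q n - x))) \<longlonglongrightarrow> (\<omega>' x - s) \<bullet> (u - x)"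
    by (intro tendsto_intros dlim)
  then have "0 \<le> (\<omega>' x - s) \<bullet> (u - x)" using mono by (intro LIMSEQ_le_const) auto
  then show ?thesis by (simp add: inner_diff_left)
qed

definition "bregman x u = \<omega> u - \<omega> x - \<omega>' x \<bullet> (u - x)"

lemma bregman_lower: "x \<in> subdiff_dom X \<omega> \<Longrightarrow> u \<in> X \<Longrightarrow> \<mu> / 2 * (nrm (u - x))\<^sup>2 \<le> bregman x u"
proof -
  assume x: "x \<in> subdiff_dom X \<omega>" and u: "u \<in> X"
  have "is_subgrad X \<omega> x (\<omega>' x)" using \<omega>'_sub x by blast
  from strongly_convex_subgrad_ineq[OF subdiff_domD[OF x] this u] show ?thesis by (simp add: bregman_def)
qed

lemma bregman_nonneg: "x \<in> subdiff_dom X \<omega> \<Longrightarrow> u \<in> X \<Longrightarrow> 0 \<le> bregman x u"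
proof -
  assume x: "x \<in> subdiff_dom X \<omega>" and u: "u \<in> X"
  have "0 \<le> \<mu> / 2 * (nrm (u - x))\<^sup>2" using \<mu>_pos by simp
  with bregman_lower[OF x u] show ?thesis by linarith
qed

lemma prox_three_point:
  assumes x: "x \<in> subdiff_dom X \<omega>" and u: "u \<in> X"
  shows "\<zeta> \<bullet> (x - u) \<le> bregman x u - bregman (prox X \<omega> \<omega>' x \<zeta>) u + (dn \<zeta>)^2 / (2 * \<mu>)"
proof -
  let ?y = "prox X \<omega> \<omega>' x \<zeta>"
  have yeq: "?y = tilt_argmin (\<zeta> - \<omega>' x)" by (rule prox_eq_tilt_argmin)
  have ysd: "?y \<in> subdiff_dom X \<omega>" unfolding yeq by (rule tilt_argmin_subdiff_dom)
  have ysg: "is_subgrad X \<omega> ?y (\<omega>' x - \<zeta>)" unfolding yeq using tilt_argmin_subgrad[of "\<zeta> - \<omega>' x"] by simp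
  have k: "(\<omega>' x - \<zeta>) \<bullet> (u - ?y) \<le> \<omega>' ?y \<bullet> (u - ?y)" by (rule subgrad_inner_le_selection[OF ysd ysg u])
  have xX: "x \<in> X" using x by (rule subdiff_domD)
  have yX: "?y \<in> X" using ysd by (rule subdiff_domD)
  have sc: "\<omega> x + \<omega>' x \<bullet> (?y - x) + \<mu> / 2 * (nrm (?y - x))\<^sup>2 \<le> \<omega> ?y"
    using strongly_convex_subgrad_ineq[OF xX _ yX] \<omega>'_sub x by blast
  have i: "\<zeta> \<bullet> (x - ?y) \<le> dn \<zeta> * nrm (?y - x)" using inner_le_dual_norm_mult[of \<zeta> "x - ?y"] nrm_minus_commute
    by simp
  have yg: "dn \<zeta> * nrm (?y - x) - \<mu> / 2 * (nrm (?y - x))\<^sup>2 \<le> (dn \<zeta>)^2 / (2 * \<mu>)"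
    by (rule young_quadratic[OF \<mu>_pos])
  have "\<zeta> \<bullet> (x - u) = \<zeta> \<bullet> (?y - u) + \<zeta> \<bullet> (x - ?y)" by (simp add: inner_diff_right)
  moreover have "bregman x u - bregman ?y u = \<omega> ?y - \<omega> x - \<omega>' x \<bullet> (u - x) + \<omega>' ?y \<bullet> (u - ?y)"
    unfolding bregman_def by simp
  moreover have "(\<omega>' x - \<zeta>) \<bullet> (u - ?y) = \<omega>' x \<bullet> (u - x) - \<omega>' x \<bullet> (?y - x) - \<zeta> \<bullet> (u - ?y)"
    by (simp add: algebra_simps inner_diff_left inner_diff_right)
  moreover have "\<zeta> \<bullet> (?y - u) = - (\<zeta> \<bullet> (u - ?y))" by (simp add: inner_diff_right)
  ultimately show ?thesis using k sc i yg by linarith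
qed

lemma minimizer_bregman:
  assumes x0: "x0 \<in> X" "\<forall>y\<in>X. \<omega> x0 \<le> \<omega> y" and u: "u \<in> X"
  shows "bregman x0 u \<le> \<omega> u - \<omega> x0" "x0 \<in> subdiff_dom X \<omega>"
proof -
  have sg: "is_subgrad X \<omega> x0 0" using x0 unfolding is_subgrad_def by simp
  then show sd: "x0 \<in> subdiff_dom X \<omega>" using x0(1) unfolding subdiff_dom_def by blast
  have "0 \<bullet> (u - x0) \<le> \<omega>' x0 \<bullet> (u - x0)" by (rule subgrad_inner_le_selection[OF sd sg u])
  then show "bregman x0 u \<le> \<omega> u - \<omega> x0" unfolding bregman_def by simp
qed

lemma borel_measurable_tilt_argmin[measurable]: "tilt_argmin \<in> borel_measurable borel"
  by (rule borel_measurable_continuous_onI[OF continuous_on_tilt_argmin])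

lemma smd_subdiff_dom:
  assumes "x0 \<in> subdiff_dom X \<omega>"
  shows "smd X \<omega> \<omega>' \<gamma> G x0 \<xi> k w \<in> subdiff_dom X \<omega>"
  by (cases k) (auto simp: prox_eq_tilt_argmin tilt_argmin_subdiff_dom assms)

end

section \<open>Stochastic mirror descent\<close>

lemma smd_cong:
  "(\<And>i. i \<in> {1..k} \<Longrightarrow> \<xi>1 i w1 = \<xi>2 i w2) \<Longrightarrow>
   smd X \<omega> \<omega>' \<gamma> G x1 \<xi>1 k w1 = smd X \<omega> \<omega>' \<gamma> G x1 \<xi>2 k w2"
  by (induction k) auto

locale smd_setting = prox_setup nrm X \<omega> \<omega>' \<mu>
  for nrm :: "'a::euclidean_space \<Rightarrow> real" and X \<omega> \<omega>' \<mu> +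
  fixes M :: "'w measure" and P :: "'b measure" and \<xi> :: "nat \<Rightarrow> 'w \<Rightarrow> 'b"
    and g :: "'a \<Rightarrow> 'b \<Rightarrow> real" and G :: "'a \<Rightarrow> 'b \<Rightarrow> 'a"
    and f :: "'a \<Rightarrow> real" and f' :: "'a \<Rightarrow> 'a"
    and L M1 M2 \<gamma> :: real and x\<omega> xs :: 'a
  assumes x\<omega>: "x\<omega> \<in> X" "\<forall>y\<in>X. \<omega> x\<omega> \<le> \<omega> y"
    and prob: "prob_space M"
    and \<xi>_meas: "\<forall>t\<ge>1. \<xi> t \<in> measurable M P"
    and \<xi>_dist: "\<forall>t\<ge>1. distr M P (\<xi> t) = P"
    and \<xi>_indep: "prob_space.indep_vars M (\<lambda>_. P) \<xi> {1..}"
    and g_meas: "(\<lambda>(x, z). g x z) \<in> borel_measurable (borel \<Otimes>\<^sub>M P)"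
    and G_meas: "(\<lambda>(x, z). G x z) \<in> borel_measurable (borel \<Otimes>\<^sub>M P)"
    and f_def: "\<forall>x\<in>X. integrable P (g x) \<and> f x = (\<integral>z. g x z \<partial>P)"
    and f'_def: "\<forall>x\<in>X. integrable P (G x) \<and> f' x = (\<integral>z. G x z \<partial>P)"
    and f'_sub: "\<forall>x\<in>X. is_subgrad X f x (f' x)"
    and A1: "\<forall>x\<in>X. dual_norm nrm (f' x) \<le> L"
    and M_nonneg: "L \<ge> 0" "M1 \<ge> 0" "M2 \<ge> 0"
    and A3a: "\<forall>x\<in>X. (\<integral>\<^sup>+ z. ennreal ((g x z - f x)\<^sup>2) \<partial>P) \<le> ennreal (M1\<^sup>2)"
    and A3b: "\<forall>x\<in>X. (\<integral>\<^sup>+ z. ennreal ((dual_norm nrm (G x z - f' x))\<^sup>2) \<partial>P) \<le> ennreal (M2\<^sup>2)"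
    and xs: "xs \<in> X" "\<forall>y\<in>X. f xs \<le> f y"

sublocale smd_setting \<subseteq> Mp: prob_space M by (rule prob)

context smd_setting
begin

text \<open>\<open>iter k\<close> is the paper's \<open>x_(k+1)\<close>; it depends on the samples \<open>\<xi> 1, \<dots>, \<xi> k\<close> only.\<close>

definition "iter k w = smd X \<omega> \<omega>' \<gamma> G x\<omega> \<xi> k w"

text \<open>The iterates as functions of the sample history, so that measurability of the iterates and
  independence of the next sample from the past can be argued on the product space.\<close>

definition "iter_of k a = smd X \<omega> \<omega>' \<gamma> G x\<omega> (\<lambda>i a. a i) k a"

definition "hist k w = restrict (\<lambda>i. \<xi> i w) {1..k}"

abbreviation "hist_space k \<equiv> PiM {1..k} (\<lambda>_. P)"

lemma x\<omega>_subdiff_dom: "x\<omega> \<in> subdiff_dom X \<omega>" using minimizer_bregman(2)[OF x\<omega> x\<omega>(1)] .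

lemma iter_of_subdiff_dom: "iter_of k a \<in> subdiff_dom X \<omega>"
  unfolding iter_of_def by (rule smd_subdiff_dom[OF x\<omega>_subdiff_dom])

lemma iter_subdiff_dom: "iter k w \<in> subdiff_dom X \<omega>"
  unfolding iter_def by (rule smd_subdiff_dom[OF x\<omega>_subdiff_dom])

lemma iter_of_in_X: "iter_of k a \<in> X" using iter_of_subdiff_dom subdiff_domD by blast

lemma iter_in_X: "iter k w \<in> X" using iter_subdiff_dom subdiff_domD by blast

lemma iter_eq_iter_of: "j \<le> k \<Longrightarrow> iter j w = iter_of j (hist k w)"
  unfolding iter_def iter_of_def hist_def by (rule smd_cong) auto

lemma iter_Suc: "iter (Suc k) w = prox X \<omega> \<omega>' (iter k w) (\<gamma> *\<^sub>R G (iter k w) (\<xi> (Suc k) w))"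
  by (simp add: iter_def)

lemma \<xi>_measurable[measurable]: "t \<ge> 1 \<Longrightarrow> \<xi> t \<in> measurable M P" using \<xi>_meas by blast

lemma \<xi>_Suc_measurable[measurable]: "\<xi> (Suc k) \<in> measurable M P" using \<xi>_meas by simp

lemma hist_measurable[measurable]: "hist k \<in> measurable M (hist_space k)"
  unfolding hist_def by (rule measurable_restrict) auto

lemma iter_of_measurable: "j \<le> k \<Longrightarrow> iter_of j \<in> borel_measurable (hist_space k)"
proof (induction j)
  case 0 then show ?case by (simp add: iter_of_def)
next
  case (Suc j)
  then have Fj: "iter_of j \<in> borel_measurable (hist_space k)" by simp
  have comp: "(\<lambda>a. a (Suc j)) \<in> measurable (hist_space k) P"
    by (rule measurable_component_singleton) (use Suc.prems in auto)
  have pair: "(\<lambda>a. (iter_of j a, a (Suc j))) \<in> measurable (hist_space k) (borel \<Otimes>\<^sub>M P)"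
    by (rule measurable_Pair[OF Fj comp])
  have Gm: "(\<lambda>a. G (iter_of j a) (a (Suc j))) \<in> borel_measurable (hist_space k)"
    using measurable_comp[OF pair G_meas] by (simp add: comp_def)
  have om: "(\<lambda>a. \<omega>' (iter_of j a)) \<in> borel_measurable (hist_space k)"
    by (rule borel_measurable_continuous_on_comp[OF Fj iter_of_subdiff_dom \<omega>'_cont])
  have eq: "iter_of (Suc j) = (\<lambda>a. tilt_argmin (\<gamma> *\<^sub>R G (iter_of j a) (a (Suc j)) - \<omega>' (iter_of j a)))"
    by (simp add: fun_eq_iff iter_of_def prox_eq_tilt_argmin)
  show ?case unfolding eq
    by (rule measurable_comp[OF _ borel_measurable_tilt_argmin, unfolded comp_def])
      (intro borel_measurable_diff borel_measurable_scaleR Gm om measurable_const, simp)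
qed

lemma iter_measurable[measurable]: "iter k \<in> borel_measurable M"
proof -
  have "iter k = (\<lambda>w. iter_of k (hist k w))" using iter_eq_iter_of by auto
  then show ?thesis using measurable_comp[OF hist_measurable iter_of_measurable[of k k]] by (simp add: comp_def)
qed

lemma prob_space_P: "prob_space P"
proof -
  have "prob_space (distr M P (\<xi> 1))" by (rule Mp.prob_space_distr) simp
  then show ?thesis using \<xi>_dist by simp
qed

sublocale Pp: prob_space P by (rule prob_space_P)

abbreviation "next_space k \<equiv> PiM {Suc k} (\<lambda>_. P)"

definition "next_sample k w = restrict (\<lambda>i. \<xi> i w) {Suc k}"

lemma next_sample_measurable[measurable]: "next_sample k \<in> measurable M (next_space k)"
  unfolding next_sample_def by (rule measurable_restrict) auto

lemma next_sample_Suc: "next_sample k w (Suc k) = \<xi> (Suc k) w" by (simp add: next_sample_def)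

lemma indep_hist_next_sample: "Mp.indep_var (hist_space k) (hist k) (next_space k) (next_sample k)"
proof -
  have ind: "Mp.indep_vars (\<lambda>_. P) \<xi> {1..}" using \<xi>_indep by simp
  show ?thesis unfolding hist_def next_sample_def
    by (rule Mp.indep_var_restrict[OF ind]) auto
qed

lemma distr_hist_next_sample:
  "distr M (hist_space k) (hist k) \<Otimes>\<^sub>M distr M (next_space k) (next_sample k)
    = distr M (hist_space k \<Otimes>\<^sub>M next_space k) (\<lambda>w. (hist k w, next_sample k w))"
  using indep_hist_next_sample[of k] unfolding Mp.indep_var_distribution_eq by simp

lemma sets_distr_hist_next_sample:
  "sets (distr M (hist_space k) (hist k) \<Otimes>\<^sub>M distr M (next_space k) (next_sample k))
    = sets (hist_space k \<Otimes>\<^sub>M next_space k)"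
  by (rule sets_pair_measure_cong) simp_all

lemma next_space_component_measurable: "(\<lambda>b. b (Suc k)) \<in> measurable (next_space k) P"
  by (rule measurable_component_singleton) simp

lemma distr_next_sample_component:
  "distr (distr M (next_space k) (next_sample k)) P (\<lambda>b. b (Suc k)) = P"
proof -
  have "distr (distr M (next_space k) (next_sample k)) P (\<lambda>b. b (Suc k))
      = distr M P (\<lambda>w. next_sample k w (Suc k))"
    by (simp add: distr_distr[OF next_space_component_measurable next_sample_measurable] comp_def)
  also have "\<dots> = P" using \<xi>_dist by (simp add: next_sample_Suc)
  finally show ?thesis .
qed

lemma measurable_hist_next_sample_comp:
  assumes H: "H \<in> borel_measurable (hist_space k \<Otimes>\<^sub>M P)"
  shows "(\<lambda>p. H (fst p, snd p (Suc k))) \<in> borel_measurable (hist_space k \<Otimes>\<^sub>M next_space k)"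
proof -
  have "(\<lambda>p. (fst p, snd p (Suc k))) \<in> measurable (hist_space k \<Otimes>\<^sub>M next_space k) (hist_space k \<Otimes>\<^sub>M P)"
    by (rule measurable_Pair[OF measurable_fst measurable_compose[OF measurable_snd next_space_component_measurable]])
  from measurable_comp[OF this H] show ?thesis by (simp add: comp_def)
qed

lemma nn_integral_hist_next_sample:
  assumes H: "H \<in> borel_measurable (hist_space k \<Otimes>\<^sub>M P)"
  shows "(\<integral>\<^sup>+w. H (hist k w, \<xi> (Suc k) w) \<partial>M) = (\<integral>\<^sup>+w. (\<integral>\<^sup>+z. H (hist k w, z) \<partial>P) \<partial>M)"
proof -
  let ?D1 = "distr M (hist_space k) (hist k)" and ?D2 = "distr M (next_space k) (next_sample k)"
  interpret D2: prob_space ?D2 by (rule Mp.prob_space_distr[OF next_sample_measurable])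
  let ?H = "\<lambda>p. H (fst p, snd p (Suc k))"
  have Hm: "?H \<in> borel_measurable (hist_space k \<Otimes>\<^sub>M next_space k)"
    by (rule measurable_hist_next_sample_comp[OF H])
  have H': "?H \<in> borel_measurable (?D1 \<Otimes>\<^sub>M ?D2)"
    using Hm measurable_cong_sets[OF sets_distr_hist_next_sample refl] by blast
  have YZ_meas: "(\<lambda>w. (hist k w, next_sample k w)) \<in> measurable M (hist_space k \<Otimes>\<^sub>M next_space k)"
    by (rule measurable_Pair[OF hist_measurable next_sample_measurable])
  have "(\<integral>\<^sup>+w. H (hist k w, \<xi> (Suc k) w) \<partial>M) = (\<integral>\<^sup>+w. ?H (hist k w, next_sample k w) \<partial>M)"
    by (simp add: next_sample_Suc)
  also have "\<dots> = integral\<^sup>N (distr M (hist_space k \<Otimes>\<^sub>M next_space k) (\<lambda>w. (hist k w, next_sample k w))) ?H"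
    by (rule nn_integral_distr[symmetric, OF YZ_meas]) (use Hm in simp)
  also have "\<dots> = integral\<^sup>N (?D1 \<Otimes>\<^sub>M ?D2) ?H" by (simp only: distr_hist_next_sample)
  also have "\<dots> = (\<integral>\<^sup>+ a. \<integral>\<^sup>+ b. ?H (a, b) \<partial>?D2 \<partial>?D1)" by (rule D2.nn_integral_fst[symmetric, OF H'])
  also have "\<dots> = (\<integral>\<^sup>+ a. \<integral>\<^sup>+ z. H (a, z) \<partial>P \<partial>?D1)"
  proof (rule nn_integral_cong)
    fix a assume "a \<in> space ?D1"
    then have "(\<lambda>z. H (a, z)) \<in> borel_measurable P" using measurable_Pair2[OF H] by simp
    then show "(\<integral>\<^sup>+ b. ?H (a, b) \<partial>?D2) = (\<integral>\<^sup>+ z. H (a, z) \<partial>P)"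
      using nn_integral_distr[of "\<lambda>b. b (Suc k)" ?D2 P "\<lambda>z. H (a, z)"] next_space_component_measurable
      by (simp add: distr_next_sample_component)
  qed
  also have "\<dots> = (\<integral>\<^sup>+w. (\<integral>\<^sup>+z. H (hist k w, z) \<partial>P) \<partial>M)"
    by (rule nn_integral_distr[OF hist_measurable]) (use Pp.borel_measurable_nn_integral_fst[OF H] in simp)
  finally show ?thesis .
qed

lemma integral_hist_next_sample:
  fixes H :: "(nat \<Rightarrow> 'b) \<times> 'b \<Rightarrow> real"
  assumes H: "H \<in> borel_measurable (hist_space k \<Otimes>\<^sub>M P)"
    and int: "integrable M (\<lambda>w. H (hist k w, \<xi> (Suc k) w))"
  shows "(\<integral>w. H (hist k w, \<xi> (Suc k) w) \<partial>M) = (\<integral>w. (\<integral>z. H (hist k w, z) \<partial>P) \<partial>M)"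
proof -
  let ?D1 = "distr M (hist_space k) (hist k)" and ?D2 = "distr M (next_space k) (next_sample k)"
  interpret D1: prob_space ?D1 by (rule Mp.prob_space_distr[OF hist_measurable])
  interpret D2: prob_space ?D2 by (rule Mp.prob_space_distr[OF next_sample_measurable])
  interpret DP: pair_sigma_finite ?D1 ?D2
    by (intro pair_sigma_finite.intro D1.sigma_finite_measure_axioms D2.sigma_finite_measure_axioms)
  let ?H = "\<lambda>p. H (fst p, snd p (Suc k))"
  have Hm: "?H \<in> borel_measurable (hist_space k \<Otimes>\<^sub>M next_space k)"
    by (rule measurable_hist_next_sample_comp[OF H])
  have YZ_meas: "(\<lambda>w. (hist k w, next_sample k w)) \<in> measurable M (hist_space k \<Otimes>\<^sub>M next_space k)"
    by (rule measurable_Pair[OF hist_measurable next_sample_measurable])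
  have int': "integrable M (\<lambda>w. ?H (hist k w, next_sample k w))" using int by (simp add: next_sample_Suc)
  have "integrable (distr M (hist_space k \<Otimes>\<^sub>M next_space k) (\<lambda>w. (hist k w, next_sample k w))) ?H"
    using integrable_distr_eq[OF YZ_meas Hm] int' by simp
  then have iD: "integrable (?D1 \<Otimes>\<^sub>M ?D2) ?H" by (simp only: distr_hist_next_sample)
  have "(\<integral>w. H (hist k w, \<xi> (Suc k) w) \<partial>M) = (\<integral>w. ?H (hist k w, next_sample k w) \<partial>M)"
    by (simp add: next_sample_Suc)
  also have "\<dots> = integral\<^sup>L (distr M (hist_space k \<Otimes>\<^sub>M next_space k) (\<lambda>w. (hist k w, next_sample k w))) ?H"
    by (rule integral_distr[symmetric, OF YZ_meas Hm])
  also have "\<dots> = integral\<^sup>L (?D1 \<Otimes>\<^sub>M ?D2) ?H" by (simp only: distr_hist_next_sample)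
  also have "\<dots> = (\<integral> a. \<integral> b. ?H (a, b) \<partial>?D2 \<partial>?D1)" by (rule DP.integral_fst'[symmetric, OF iD])
  also have "\<dots> = (\<integral> a. \<integral> z. H (a, z) \<partial>P \<partial>?D1)"
  proof (rule Bochner_Integration.integral_cong[OF refl])
    fix a assume "a \<in> space ?D1"
    then have "(\<lambda>z. H (a, z)) \<in> borel_measurable P" using measurable_Pair2[OF H] by simp
    then show "(\<integral> b. ?H (a, b) \<partial>?D2) = (\<integral> z. H (a, z) \<partial>P)"
      using integral_distr[of "\<lambda>b. b (Suc k)" ?D2 P "\<lambda>z. H (a, z)"] next_space_component_measurable
      by (simp add: distr_next_sample_component)
  qed
  also have "\<dots> = (\<integral>w. (\<integral>z. H (hist k w, z) \<partial>P) \<partial>M)"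
  proof -
    have Hc: "(\<lambda>(x, y). H (x, y)) \<in> borel_measurable (hist_space k \<Otimes>\<^sub>M P)" unfolding case_prod_eta by (rule H)
    show ?thesis by (rule integral_distr[OF hist_measurable Pp.borel_measurable_lebesgue_integral[OF Hc]])
  qed
  finally show ?thesis .
qed

text \<open>Everywhere defined versions of \<open>f'\<close> and \<open>f\<close> (they agree on \<open>X\<close>), measurable as functions
  on the whole space.\<close>

definition "mean_grad x = (\<integral>z. G x z \<partial>P)"

definition "mean_value x = (\<integral>z. g x z \<partial>P)"

lemma borel_measurable_mean_grad[measurable]: "mean_grad \<in> borel_measurable borel"
proof -
  show ?thesis unfolding mean_grad_def by (rule Pp.borel_measurable_lebesgue_integral[OF G_meas])
qed

lemma borel_measurable_mean_value[measurable]: "mean_value \<in> borel_measurable borel"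
proof -
  show ?thesis unfolding mean_value_def by (rule Pp.borel_measurable_lebesgue_integral[OF g_meas])
qed

lemma mean_grad_eq: "x \<in> X \<Longrightarrow> mean_grad x = f' x" using f'_def by (simp add: mean_grad_def)

lemma mean_value_eq: "x \<in> X \<Longrightarrow> mean_value x = f x" using f_def by (simp add: mean_value_def)

lemma integral_value_noise: "x \<in> X \<Longrightarrow> (\<integral>z. g x z - mean_value x \<partial>P) = 0"
proof -
  assume "x \<in> X"
  then have "integrable P (g x)" using f_def by blast
  then show ?thesis by (subst Bochner_Integration.integral_diff) (auto simp: Pp.prob_space mean_value_def)
qed

lemma integral_grad_noise_inner: "x \<in> X \<Longrightarrow> (\<integral>z. (G x z - mean_grad x) \<bullet> v \<partial>P) = 0"
proof -
  assume "x \<in> X"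
  then have iG: "integrable P (G x)" using f'_def by blast
  have "(\<integral>z. (G x z - mean_grad x) \<bullet> v \<partial>P) = (\<integral>z. G x z \<bullet> v \<partial>P) - mean_grad x \<bullet> v"
    using iG by (simp add: inner_diff_left Pp.prob_space)
  also have "\<dots> = 0" using iG by (simp add: mean_grad_def)
  finally show ?thesis .
qed

lemma iter_of_pair_measurable:
  "j \<le> k \<Longrightarrow> (\<lambda>p. (iter_of j (fst p), snd p)) \<in> measurable (hist_space k \<Otimes>\<^sub>M P) (borel \<Otimes>\<^sub>M P)"
  by (rule measurable_Pair[OF measurable_compose[OF measurable_fst iter_of_measurable] measurable_snd])

lemma nn_integral_iter_next_sample:
  assumes \<phi>: "(\<lambda>(x, z). \<phi> x z) \<in> borel_measurable (borel \<Otimes>\<^sub>M P)"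
  shows "(\<integral>\<^sup>+w. \<phi> (iter k w) (\<xi> (Suc k) w) \<partial>M) = (\<integral>\<^sup>+w. (\<integral>\<^sup>+z. \<phi> (iter k w) z \<partial>P) \<partial>M)"
proof -
  let ?H = "\<lambda>p. \<phi> (iter_of k (fst p)) (snd p)"
  have H: "?H \<in> borel_measurable (hist_space k \<Otimes>\<^sub>M P)"
    using measurable_comp[OF iter_of_pair_measurable[of k k] \<phi>] by (simp add: comp_def case_prod_beta)
  from nn_integral_hist_next_sample[OF H] show ?thesis by (simp add: iter_eq_iter_of[of k k])
qed

definition "grad_est k w = G (iter k w) (\<xi> (Suc k) w)"

definition "grad_noise k w = dn (grad_est k w - mean_grad (iter k w))"

definition "value_noise k w = g (iter k w) (\<xi> (Suc k) w) - mean_value (iter k w)"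

lemma grad_est_measurable[measurable]: "grad_est k \<in> borel_measurable M"
proof -
  have "(\<lambda>w. (iter k w, \<xi> (Suc k) w)) \<in> measurable M (borel \<Otimes>\<^sub>M P)"
    by (rule measurable_Pair[OF iter_measurable \<xi>_Suc_measurable])
  from measurable_comp[OF this G_meas] show ?thesis unfolding grad_est_def by (simp add: comp_def)
qed

lemma sample_value_measurable[measurable]: "(\<lambda>w. g (iter k w) (\<xi> (Suc k) w)) \<in> borel_measurable M"
proof -
  have "(\<lambda>w. (iter k w, \<xi> (Suc k) w)) \<in> measurable M (borel \<Otimes>\<^sub>M P)"
    by (rule measurable_Pair[OF iter_measurable \<xi>_Suc_measurable])
  from measurable_comp[OF this g_meas] show ?thesis by (simp add: comp_def)
qed

lemma grad_noise_measurable[measurable]: "grad_noise k \<in> borel_measurable M"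
  unfolding grad_noise_def by measurable

lemma value_noise_measurable[measurable]: "value_noise k \<in> borel_measurable M"
  unfolding value_noise_def by measurable

lemma grad_noise_nn_second_moment: "(\<integral>\<^sup>+w. ennreal ((grad_noise k w)\<^sup>2) \<partial>M) \<le> ennreal (M2\<^sup>2)"
proof -
  have \<phi>: "(\<lambda>(x, z). ennreal ((dn (G x z - mean_grad x))\<^sup>2)) \<in> borel_measurable (borel \<Otimes>\<^sub>M P)"
    using G_meas by measurable
  have "(\<integral>\<^sup>+w. ennreal ((grad_noise k w)\<^sup>2) \<partial>M) = (\<integral>\<^sup>+w. (\<integral>\<^sup>+z. ennreal ((dn (G (iter k w) z - mean_grad (iter k w)))\<^sup>2) \<partial>P) \<partial>M)"
    using nn_integral_iter_next_sample[OF \<phi>, of k] by (simp add: grad_noise_def grad_est_def)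
  also have "\<dots> \<le> ennreal (M2\<^sup>2)"
    by (intro Mp.nn_integral_le_const AE_I2) (use A3b iter_in_X mean_grad_eq in auto)
  finally show ?thesis .
qed

lemma value_noise_nn_second_moment: "(\<integral>\<^sup>+w. ennreal ((value_noise k w)\<^sup>2) \<partial>M) \<le> ennreal (M1\<^sup>2)"
proof -
  have \<phi>: "(\<lambda>(x, z). ennreal ((g x z - mean_value x)\<^sup>2)) \<in> borel_measurable (borel \<Otimes>\<^sub>M P)"
    using g_meas by measurable
  have "(\<integral>\<^sup>+w. ennreal ((value_noise k w)\<^sup>2) \<partial>M) = (\<integral>\<^sup>+w. (\<integral>\<^sup>+z. ennreal ((g (iter k w) z - mean_value (iter k w))\<^sup>2) \<partial>P) \<partial>M)"
    using nn_integral_iter_next_sample[OF \<phi>, of k] by (simp add: value_noise_def)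
  also have "\<dots> \<le> ennreal (M1\<^sup>2)"
    by (intro Mp.nn_integral_le_const AE_I2) (use A3a iter_in_X mean_value_eq in auto)
  finally show ?thesis .
qed

lemma grad_noise_integrable: "integrable M (\<lambda>w. (grad_noise k w)\<^sup>2)" "integrable M (grad_noise k)"
  using Mp.integrable_of_nn_second_moment[OF grad_noise_measurable grad_noise_nn_second_moment] by auto

lemma value_noise_integrable: "integrable M (\<lambda>w. (value_noise k w)\<^sup>2)" "integrable M (value_noise k)"
  using Mp.integrable_of_nn_second_moment[OF value_noise_measurable value_noise_nn_second_moment] by auto

lemma value_noise_second_moment: "(\<integral>w. (value_noise k w)\<^sup>2 \<partial>M) \<le> M1\<^sup>2"
proof -
  have "ennreal (\<integral>w. (value_noise k w)\<^sup>2 \<partial>M) = (\<integral>\<^sup>+w. ennreal ((value_noise k w)\<^sup>2) \<partial>M)"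
    by (rule nn_integral_eq_integral[symmetric]) (use value_noise_integrable in auto)
  also have "\<dots> \<le> ennreal (M1\<^sup>2)" by (rule value_noise_nn_second_moment)
  finally show ?thesis by (subst (asm) ennreal_le_iff) simp_all
qed

lemma grad_noise_second_moment: "(\<integral>w. (grad_noise k w)\<^sup>2 \<partial>M) \<le> M2\<^sup>2"
proof -
  have "ennreal (\<integral>w. (grad_noise k w)\<^sup>2 \<partial>M) = (\<integral>\<^sup>+w. ennreal ((grad_noise k w)\<^sup>2) \<partial>M)"
    by (rule nn_integral_eq_integral[symmetric]) (use grad_noise_integrable in auto)
  also have "\<dots> \<le> ennreal (M2\<^sup>2)" by (rule grad_noise_nn_second_moment)
  finally show ?thesis by (subst (asm) ennreal_le_iff) simp_all
qed

lemma radius_exists: "\<exists>r\<ge>0. \<forall>u\<in>X. nrm (u - xs) \<le> r"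
proof -
  obtain B where B: "\<forall>u\<in>X. norm u \<le> B" using X(3) by (auto simp: bounded_iff)
  obtain C where C: "C \<ge> 0" "\<And>v. nrm v \<le> C * norm v" using nrm_le_mult_norm by blast
  have "nrm (u - xs) \<le> C * (B + B)" if "u \<in> X" for u
  proof -
    have "nrm (u - xs) \<le> C * norm (u - xs)" by (rule C(2))
    also have "\<dots> \<le> C * (norm u + norm xs)" using C(1) by (intro mult_left_mono norm_triangle_ineq4)
    also have "\<dots> \<le> C * (B + B)" using C(1) B that xs(1) by (intro mult_left_mono add_mono) auto
    finally show ?thesis .
  qed
  moreover have "0 \<le> C * (B + B)"
    using B xs(1) C(1) by (meson add_nonneg_nonneg norm_ge_zero order_trans zero_le_mult_iff)
  ultimately show ?thesis by blast
qed

definition "radius = (SOME r. r \<ge> 0 \<and> (\<forall>u\<in>X. nrm (u - xs) \<le> r))"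

lemma radius: "radius \<ge> 0" "u \<in> X \<Longrightarrow> nrm (u - xs) \<le> radius"
  using someI_ex[OF radius_exists] unfolding radius_def[symmetric] by auto

definition "noise_inner k w = (grad_est k w - mean_grad (iter k w)) \<bullet> (iter k w - xs)"

lemma noise_inner_measurable[measurable]: "noise_inner k \<in> borel_measurable M"
  unfolding noise_inner_def by measurable

lemma noise_inner_integrable: "integrable M (noise_inner k)"
proof (rule Bochner_Integration.integrable_bound[OF _ noise_inner_measurable])
  show "integrable M (\<lambda>w. radius * grad_noise k w)" using grad_noise_integrable by simp
  show "AE w in M. norm (noise_inner k w) \<le> norm (radius * grad_noise k w)"
  proof (intro AE_I2)
    fix w
    have "\<bar>noise_inner k w\<bar> \<le> grad_noise k w * nrm (iter k w - xs)"
      unfolding noise_inner_def grad_noise_def by (rule abs_inner_le_dual_norm_mult)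
    also have "\<dots> \<le> grad_noise k w * radius"
      using radius(2)[OF iter_in_X] dual_norm_nonneg by (simp add: grad_noise_def mult_left_mono)
    finally show "norm (noise_inner k w) \<le> norm (radius * grad_noise k w)"
      using radius(1) dual_norm_nonneg by (simp add: grad_noise_def abs_mult mult.commute)
  qed
qed

lemma noise_inner_expectation: "(\<integral>w. noise_inner k w \<partial>M) = 0"
proof -
  have \<phi>: "(\<lambda>(x, z). (G x z - mean_grad x) \<bullet> (x - xs)) \<in> borel_measurable (borel \<Otimes>\<^sub>M P)"
    using G_meas by measurable
  let ?H = "\<lambda>p. (G (iter_of k (fst p)) (snd p) - mean_grad (iter_of k (fst p))) \<bullet> (iter_of k (fst p) - xs)"
  have H: "?H \<in> borel_measurable (hist_space k \<Otimes>\<^sub>M P)"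
    using measurable_comp[OF iter_of_pair_measurable[of k k] \<phi>] by (simp add: comp_def case_prod_beta)
  have eq: "noise_inner k w = ?H (hist k w, \<xi> (Suc k) w)" for w
    by (simp add: noise_inner_def grad_est_def iter_eq_iter_of[of k k])
  have int: "integrable M (\<lambda>w. ?H (hist k w, \<xi> (Suc k) w))"
    using noise_inner_integrable[of k] unfolding eq by simp
  have "(\<integral>w. noise_inner k w \<partial>M) = (\<integral>w. (\<integral>z. ?H (hist k w, z) \<partial>P) \<partial>M)"
    unfolding eq by (rule integral_hist_next_sample[OF H int])
  also have "\<dots> = (\<integral>w. 0 \<partial>M)"
    by (intro Bochner_Integration.integral_cong refl) (simp add: integral_grad_noise_inner iter_of_in_X)
  finally show ?thesis by simp
qed

lemma grad_est_second_moment: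
  "integrable M (\<lambda>w. (dn (grad_est k w))\<^sup>2)" "(\<integral>w. (dn (grad_est k w))\<^sup>2 \<partial>M) \<le> 2 * (M2\<^sup>2 + L\<^sup>2)"
proof -
  have pw: "(dn (grad_est k w))\<^sup>2 \<le> 2 * (grad_noise k w)\<^sup>2 + 2 * L\<^sup>2" for w
  proof -
    have "dn (grad_est k w) \<le> grad_noise k w + dn (mean_grad (iter k w))"
      using dual_norm_triangle[of "grad_est k w - mean_grad (iter k w)" "mean_grad (iter k w)"]
        by (simp add: grad_noise_def)
    also have "\<dots> \<le> grad_noise k w + L" using A1 iter_in_X mean_grad_eq by auto
    finally have a: "dn (grad_est k w) \<le> grad_noise k w + L" .
    have "(dn (grad_est k w))\<^sup>2 \<le> (grad_noise k w + L)\<^sup>2" using a dual_norm_nonneg by (intro power_mono) auto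
    also have "\<dots> \<le> 2 * (grad_noise k w)\<^sup>2 + 2 * L\<^sup>2"
    proof -
      have "0 \<le> (grad_noise k w - L)\<^sup>2" by simp
      then show ?thesis by (simp add: power2_eq_square algebra_simps)
    qed
    finally show ?thesis .
  qed
  have i2: "integrable M (\<lambda>w. 2 * (grad_noise k w)\<^sup>2 + 2 * L\<^sup>2)" using grad_noise_integrable by simp
  show i1: "integrable M (\<lambda>w. (dn (grad_est k w))\<^sup>2)"
  proof (rule Bochner_Integration.integrable_bound[OF i2])
    show "(\<lambda>w. (dn (grad_est k w))\<^sup>2) \<in> borel_measurable M" by measurable
    show "AE w in M. norm ((dn (grad_est k w))\<^sup>2) \<le> norm (2 * (grad_noise k w)\<^sup>2 + 2 * L\<^sup>2)"
      using pw by (intro AE_I2) (smt (verit) real_norm_def zero_le_power2)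
  qed
  have "(\<integral>w. (dn (grad_est k w))\<^sup>2 \<partial>M) \<le> (\<integral>w. 2 * (grad_noise k w)\<^sup>2 + 2 * L\<^sup>2 \<partial>M)"
    by (rule integral_mono[OF i1 i2 pw])
  also have "\<dots> = 2 * (\<integral>w. (grad_noise k w)\<^sup>2 \<partial>M) + 2 * L\<^sup>2"
    using grad_noise_integrable by (simp add: Mp.prob_space)
  also have "\<dots> \<le> 2 * (M2\<^sup>2 + L\<^sup>2)" using grad_noise_second_moment[of k] by simp
  finally show "(\<integral>w. (dn (grad_est k w))\<^sup>2 \<partial>M) \<le> 2 * (M2\<^sup>2 + L\<^sup>2)" .
qed

lemma value_noise_mult_integrable: "integrable M (\<lambda>w. value_noise j w * value_noise k w)"
proof (rule Bochner_Integration.integrable_bound)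
  show "integrable M (\<lambda>w. (value_noise j w)\<^sup>2 + (value_noise k w)\<^sup>2)" using value_noise_integrable by simp
  show "(\<lambda>w. value_noise j w * value_noise k w) \<in> borel_measurable M" by measurable
  have "\<bar>a * b\<bar> \<le> a\<^sup>2 + b\<^sup>2" for a b :: real
  proof -
    have "\<bar>a * b\<bar> \<le> 2 * \<bar>a\<bar> * \<bar>b\<bar>" by (simp add: abs_mult)
    also have "\<dots> \<le> a\<^sup>2 + b\<^sup>2" using sum_squares_bound[of "\<bar>a\<bar>" "\<bar>b\<bar>"] by simp
    finally show ?thesis .
  qed
  then show "AE w in M. norm (value_noise j w * value_noise k w)
      \<le> norm ((value_noise j w)\<^sup>2 + (value_noise k w)\<^sup>2)"
    by (intro AE_I2) simp
qed

lemma value_noise_uncorrelated: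
  assumes jk: "j < k"
  shows "(\<integral>w. value_noise j w * value_noise k w \<partial>M) = 0"
proof -
  have jk': "j \<le> k" using jk by simp
  have comp: "(\<lambda>a. a (Suc j)) \<in> measurable (hist_space k) P"
    by (rule measurable_component_singleton) (use jk in auto)
  have pj: "(\<lambda>a. (iter_of j a, a (Suc j))) \<in> measurable (hist_space k) (borel \<Otimes>\<^sub>M P)"
    by (rule measurable_Pair[OF iter_of_measurable[OF jk'] comp])
  have psi: "(\<lambda>a. g (iter_of j a) (a (Suc j)) - mean_value (iter_of j a)) \<in> borel_measurable (hist_space k)"
  proof -
    have "(\<lambda>a. g (iter_of j a) (a (Suc j))) \<in> borel_measurable (hist_space k)"
      using measurable_comp[OF pj g_meas] by (simp add: comp_def)
    moreover have "(\<lambda>a. mean_value (iter_of j a)) \<in> borel_measurable (hist_space k)"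
      using measurable_comp[OF iter_of_measurable[OF jk'] borel_measurable_mean_value] by (simp add: comp_def)
    ultimately show ?thesis by measurable
  qed
  have \<phi>: "(\<lambda>(x, z). g x z - mean_value x) \<in> borel_measurable (borel \<Otimes>\<^sub>M P)"
    using g_meas by measurable
  have phi2: "(\<lambda>p. g (iter_of k (fst p)) (snd p) - mean_value (iter_of k (fst p)))
      \<in> borel_measurable (hist_space k \<Otimes>\<^sub>M P)"
    using measurable_comp[OF iter_of_pair_measurable[of k k] \<phi>] by (simp add: comp_def case_prod_beta)
  let ?H = "\<lambda>p. (g (iter_of j (fst p)) (fst p (Suc j)) - mean_value (iter_of j (fst p)))
    * (g (iter_of k (fst p)) (snd p) - mean_value (iter_of k (fst p)))"
  have H: "?H \<in> borel_measurable (hist_space k \<Otimes>\<^sub>M P)"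
    using measurable_compose[OF measurable_fst psi] phi2 by measurable
  have eq: "value_noise j w * value_noise k w = ?H (hist k w, \<xi> (Suc k) w)" for w
  proof -
    have "hist k w (Suc j) = \<xi> (Suc j) w" using jk by (simp add: hist_def)
    then show ?thesis by (simp add: value_noise_def iter_eq_iter_of[OF jk'] iter_eq_iter_of[of k k])
  qed
  have int: "integrable M (\<lambda>w. ?H (hist k w, \<xi> (Suc k) w))"
    using value_noise_mult_integrable[of j k] unfolding eq by simp
  have "(\<integral>w. value_noise j w * value_noise k w \<partial>M) = (\<integral>w. (\<integral>z. ?H (hist k w, z) \<partial>P) \<partial>M)"
    unfolding eq by (rule integral_hist_next_sample[OF H int])
  also have "\<dots> = (\<integral>w. 0 \<partial>M)"
    by (intro Bochner_Integration.integral_cong refl) (simp add: integral_value_noise iter_of_in_X)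
  finally show ?thesis by simp
qed

lemma value_noise_mult_expectation:
  "(\<integral>w. value_noise j w * value_noise k w \<partial>M) = (if j = k then \<integral>w. (value_noise j w)\<^sup>2 \<partial>M else 0)"
proof (cases j k rule: linorder_cases)
  case less then show ?thesis using value_noise_uncorrelated by simp
next
  case equal then show ?thesis by (simp add: power2_eq_square)
next
  case greater then show ?thesis using value_noise_uncorrelated[of k j] by (simp add: mult.commute)
qed

lemma value_noise_sum_second_moment: "(\<integral>w. (\<Sum>k<N. value_noise k w)\<^sup>2 \<partial>M) \<le> real N * M1\<^sup>2"
proof -
  have "(\<integral>w. (\<Sum>k<N. value_noise k w)\<^sup>2 \<partial>M)
      = (\<Sum>j<N. \<Sum>k<N. \<integral>w. value_noise j w * value_noise k w \<partial>M)"
    using value_noise_mult_integrable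
    by (simp add: power2_eq_square sum_product Bochner_Integration.integral_sum Bochner_Integration.integrable_sum)
  also have "\<dots> = (\<Sum>j<N. \<integral>w. (value_noise j w)\<^sup>2 \<partial>M)"
    by (intro sum.cong refl) (simp add: value_noise_mult_expectation)
  also have "\<dots> \<le> (\<Sum>j<N. M1\<^sup>2)" by (intro sum_mono value_noise_second_moment)
  finally show ?thesis by simp
qed

lemma value_noise_sum_abs_expectation: "(\<integral>w. \<bar>\<Sum>k<N. value_noise k w\<bar> \<partial>M) \<le> sqrt (real N) * M1"
proof -
  have i1: "integrable M (\<lambda>w. \<Sum>k<N. value_noise k w)" using value_noise_integrable by simp
  have i2: "integrable M (\<lambda>w. (\<Sum>k<N. value_noise k w)\<^sup>2)"
  proof -
    have "(\<lambda>w. (\<Sum>k<N. value_noise k w)\<^sup>2) = (\<lambda>w. \<Sum>j<N. \<Sum>k<N. value_noise j w * value_noise k w)"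
      by (simp add: power2_eq_square sum_product)
    then show ?thesis using value_noise_mult_integrable by (simp add: Bochner_Integration.integrable_sum)
  qed
  have "(\<integral>w. \<bar>\<Sum>k<N. value_noise k w\<bar> \<partial>M)\<^sup>2 \<le> real N * M1\<^sup>2"
    using Mp.expectation_abs_squared_le[OF i1 i2] value_noise_sum_second_moment[of N] by linarith
  also have "\<dots> = (sqrt (real N) * M1)\<^sup>2" by (simp add: power_mult_distrib)
  finally have sq: "(\<integral>w. \<bar>\<Sum>k<N. value_noise k w\<bar> \<partial>M)\<^sup>2 \<le> (sqrt (real N) * M1)\<^sup>2" .
  have "0 \<le> sqrt (real N) * M1" using M_nonneg by simp
  with sq show ?thesis by (rule power2_le_imp_le)
qed

definition "gap k w = f' (iter k w) \<bullet> (iter k w - xs)"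

lemma gap_eq_mean_grad: "gap k w = mean_grad (iter k w) \<bullet> (iter k w - xs)"
  by (simp add: gap_def mean_grad_eq iter_in_X)

lemma gap_measurable[measurable]: "gap k \<in> borel_measurable M"
proof -
  have "gap k = (\<lambda>w. mean_grad (iter k w) \<bullet> (iter k w - xs))" by (simp add: fun_eq_iff gap_eq_mean_grad)
  then show ?thesis by simp
qed

lemma abs_gap_le: "\<bar>gap k w\<bar> \<le> L * radius"
proof -
  have "\<bar>gap k w\<bar> \<le> dn (f' (iter k w)) * nrm (iter k w - xs)"
    unfolding gap_def by (rule abs_inner_le_dual_norm_mult)
  also have "\<dots> \<le> L * radius" using A1 iter_in_X radius dual_norm_nonneg M_nonneg by (intro mult_mono) auto
  finally show ?thesis .
qed

lemma gap_integrable: "integrable M (gap k)"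
  by (rule Bochner_Integration.integrable_bound[OF Mp.integrable_const[of "L * radius"] gap_measurable])
     (use abs_gap_le M_nonneg radius in \<open>auto intro!: AE_I2 simp: abs_le_iff\<close>)

lemma value_gap_le_gap: "f (iter k w) - f xs \<le> gap k w"
proof -
  have "f (iter k w) + f' (iter k w) \<bullet> (xs - iter k w) \<le> f xs"
    using f'_sub iter_in_X xs(1) unfolding is_subgrad_def by blast
  then show ?thesis by (simp add: gap_def inner_diff_right)
qed

lemma gap_nonneg: "0 \<le> gap k w"
  using value_gap_le_gap[of k w] xs(2) iter_in_X[of k w] by fastforce

lemma grad_est_inner_split: "grad_est k w \<bullet> (iter k w - xs) = gap k w + noise_inner k w"
  by (simp add: gap_eq_mean_grad noise_inner_def inner_diff_left)

lemma smd_telescoped: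
  "(\<Sum>k<n. (\<gamma> *\<^sub>R grad_est k w) \<bullet> (iter k w - xs))
    \<le> bregman (iter 0 w) xs - bregman (iter n w) xs + (\<Sum>k<n. (dn (\<gamma> *\<^sub>R grad_est k w))\<^sup>2 / (2 * \<mu>))"
proof (induction n)
  case 0 then show ?case by simp
next
  case (Suc n)
  have "(\<gamma> *\<^sub>R grad_est n w) \<bullet> (iter n w - xs)
      \<le> bregman (iter n w) xs - bregman (iter (Suc n) w) xs + (dn (\<gamma> *\<^sub>R grad_est n w))\<^sup>2 / (2 * \<mu>)"
    unfolding iter_Suc grad_est_def by (rule prox_three_point[OF iter_subdiff_dom xs(1)])
  with Suc show ?case by simp
qed

definition "\<omega>_range = Sup (\<omega> ` X) - Inf (\<omega> ` X)"

lemma \<omega>_image_bdd: "bdd_above (\<omega> ` X)" "bdd_below (\<omega> ` X)"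
proof -
  have "bounded (\<omega> ` X)" by (rule compact_imp_bounded[OF compact_continuous_image[OF \<omega>_cont compact_X]])
  then show "bdd_above (\<omega> ` X)" "bdd_below (\<omega> ` X)"
    by (auto simp: bounded_imp_bdd_above bounded_imp_bdd_below)
qed

lemma bregman_start_le: "bregman (iter 0 w) xs \<le> \<omega>_range"
proof -
  have "bregman x\<omega> xs \<le> \<omega> xs - \<omega> x\<omega>" by (rule minimizer_bregman(1)[OF x\<omega> xs(1)])
  moreover have "\<omega> xs \<le> Sup (\<omega> ` X)" using xs(1) \<omega>_image_bdd by (intro cSup_upper) auto
  moreover have "Inf (\<omega> ` X) \<le> \<omega> x\<omega>" using x\<omega>(1) \<omega>_image_bdd by (intro cInf_lower) auto
  ultimately show ?thesis by (simp add: iter_def \<omega>_range_def)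
qed

lemma \<omega>_range_nonneg: "\<omega>_range \<ge> 0"
proof -
  have "Inf (\<omega> ` X) \<le> \<omega> x\<omega>" using x\<omega>(1) \<omega>_image_bdd by (intro cInf_lower) auto
  moreover have "\<omega> x\<omega> \<le> Sup (\<omega> ` X)" using x\<omega>(1) \<omega>_image_bdd by (intro cSup_upper) auto
  ultimately show ?thesis by (simp add: \<omega>_range_def)
qed

lemma smd_pathwise_bound:
  assumes "\<gamma> \<ge> 0"
  shows "\<gamma> * (\<Sum>k<N. gap k w + noise_inner k w) \<le> \<omega>_range + \<gamma>\<^sup>2 / (2 * \<mu>) * (\<Sum>k<N. (dn (grad_est k w))\<^sup>2)"
proof -
  have "\<gamma> * (\<Sum>k<N. gap k w + noise_inner k w) = (\<Sum>k<N. (\<gamma> *\<^sub>R grad_est k w) \<bullet> (iter k w - xs))"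
    by (simp add: grad_est_inner_split sum_distrib_left)
  also have "\<dots> \<le> bregman (iter 0 w) xs - bregman (iter N w) xs + (\<Sum>k<N. (dn (\<gamma> *\<^sub>R grad_est k w))\<^sup>2 / (2 * \<mu>))"
    by (rule smd_telescoped)
  also have "\<dots> \<le> \<omega>_range + (\<Sum>k<N. (dn (\<gamma> *\<^sub>R grad_est k w))\<^sup>2 / (2 * \<mu>))"
    using bregman_start_le[of w] bregman_nonneg[OF iter_subdiff_dom xs(1), of N w] by linarith
  also have "(\<Sum>k<N. (dn (\<gamma> *\<^sub>R grad_est k w))\<^sup>2 / (2 * \<mu>)) = \<gamma>\<^sup>2 / (2 * \<mu>) * (\<Sum>k<N. (dn (grad_est k w))\<^sup>2)"
    by (simp add: dual_norm_scaleR[OF assms] power_mult_distrib sum_distrib_left)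
  finally show ?thesis .
qed

lemma smd_expected_bound:
  assumes "\<gamma> \<ge> 0"
  shows "\<gamma> * (\<Sum>k<N. (\<integral>w. gap k w \<partial>M)) \<le> \<omega>_range + \<gamma>\<^sup>2 * real N * (M2\<^sup>2 + L\<^sup>2) / \<mu>"
proof -
  have i1: "integrable M (\<lambda>w. \<gamma> * (\<Sum>k<N. gap k w + noise_inner k w))"
    using gap_integrable noise_inner_integrable by simp
  have i2: "integrable M (\<lambda>w. \<omega>_range + \<gamma>\<^sup>2 / (2 * \<mu>) * (\<Sum>k<N. (dn (grad_est k w))\<^sup>2))"
    using grad_est_second_moment(1) by simp
  have "\<gamma> * (\<Sum>k<N. (\<integral>w. gap k w \<partial>M)) = (\<integral>w. \<gamma> * (\<Sum>k<N. gap k w + noise_inner k w) \<partial>M)"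
    using gap_integrable noise_inner_integrable noise_inner_expectation
    by (simp add: Bochner_Integration.integral_sum Bochner_Integration.integral_add sum.distrib)
  also have "\<dots> \<le> (\<integral>w. \<omega>_range + \<gamma>\<^sup>2 / (2 * \<mu>) * (\<Sum>k<N. (dn (grad_est k w))\<^sup>2) \<partial>M)"
    by (rule integral_mono[OF i1 i2 smd_pathwise_bound[OF assms]])
  also have "\<dots> = \<omega>_range + \<gamma>\<^sup>2 / (2 * \<mu>) * (\<Sum>k<N. (\<integral>w. (dn (grad_est k w))\<^sup>2 \<partial>M))"
    using grad_est_second_moment(1) by (simp add: Mp.prob_space Bochner_Integration.integral_sum)
  also have "\<dots> \<le> \<omega>_range + \<gamma>\<^sup>2 / (2 * \<mu>) * (\<Sum>k<N. 2 * (M2\<^sup>2 + L\<^sup>2))"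
    using grad_est_second_moment(2) \<mu>_pos by (intro add_left_mono mult_left_mono sum_mono) auto
  also have "\<dots> = \<omega>_range + \<gamma>\<^sup>2 * real N * (M2\<^sup>2 + L\<^sup>2) / \<mu>" using \<mu>_pos by (simp add: field_simps)
  finally show ?thesis .
qed

lemma X_eq_singleton_if_\<omega>_range_0:
  assumes "\<omega>_range = 0" "u \<in> X" shows "u = x\<omega>"
proof -
  have sg: "is_subgrad X \<omega> x\<omega> 0" using x\<omega> unfolding is_subgrad_def by simp
  have a: "\<omega> x\<omega> + 0 \<bullet> (u - x\<omega>) + \<mu> / 2 * (nrm (u - x\<omega>))\<^sup>2 \<le> \<omega> u"
    by (rule strongly_convex_subgrad_ineq[OF x\<omega>(1) sg assms(2)])
  have "\<omega> u \<le> Sup (\<omega> ` X)" using assms(2) \<omega>_image_bdd by (intro cSup_upper) auto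
  moreover have "Inf (\<omega> ` X) \<le> \<omega> x\<omega>" using x\<omega>(1) \<omega>_image_bdd by (intro cInf_lower) auto
  ultimately have "\<mu> / 2 * (nrm (u - x\<omega>))\<^sup>2 \<le> 0" using a assms(1) by (simp add: \<omega>_range_def)
  then have "(nrm (u - x\<omega>))\<^sup>2 \<le> 0" using \<mu>_pos by (simp add: mult_le_0_iff)
  then have "nrm (u - x\<omega>) = 0" using nrm_nonneg[of "u - x\<omega>"] by (simp add: power2_eq_square mult_le_0_iff)
  then show ?thesis by simp
qed

lemma expected_gap_sum_bound:
  assumes N: "N \<ge> 1"
    and \<gamma>: "\<gamma> = sqrt (2 * \<omega>_range) * sqrt \<mu> / (sqrt (2 * (M2\<^sup>2 + L\<^sup>2)) * sqrt (real N))"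
  shows "(\<Sum>k<N. \<integral>w. gap k w \<partial>M)
      \<le> real N * (sqrt (2 * \<omega>_range) * sqrt (2 * (M2\<^sup>2 + L\<^sup>2)) / (sqrt \<mu> * sqrt (real N)))"
    (is "?S \<le> real N * ?R")
proof -
  let ?Sg = "M2\<^sup>2 + L\<^sup>2"
  \<comment> \<open>If \<open>L = 0\<close> or \<open>\<omega>_range = 0\<close>, the stepsize may be \<open>0\<close> (division by zero), but then every
    gap vanishes.\<close>
  have R_nonneg: "0 \<le> real N * ?R" using \<mu>_pos \<omega>_range_nonneg by simp
  have "?Sg > 0" if "L \<noteq> 0" using that by (simp add: add_nonneg_pos)
  then consider (L0) "L = 0" | (B0) "\<omega>_range = 0" | (pos) "?Sg > 0" "\<omega>_range > 0"
    using \<omega>_range_nonneg by fastforce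
  then show ?thesis
  proof cases
    case L0
    then have "gap k w = 0" for k w using abs_gap_le[of k w] by simp
    with R_nonneg show ?thesis by simp
  next
    case B0
    have "iter k w = xs" for k w
      using X_eq_singleton_if_\<omega>_range_0[OF B0] iter_in_X xs(1) by metis
    then have "gap k w = 0" for k w by (simp add: gap_def)
    with R_nonneg show ?thesis by simp
  next
    case pos
    define a b c D where "a = sqrt (2 * ?Sg)" and "b = sqrt (real N)" and "c = sqrt \<mu>"
      and "D = sqrt (2 * \<omega>_range)"
    have a: "a\<^sup>2 = 2 * ?Sg" "a > 0" and b: "b\<^sup>2 = real N" "b > 0" and c: "c\<^sup>2 = \<mu>" "c > 0"
      and D: "D\<^sup>2 = 2 * \<omega>_range" "D > 0"
      using pos N \<mu>_pos by (simp_all add: a_def b_def c_def D_def)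
    have \<gamma>': "\<gamma> = D * c / (a * b)" and R: "?R = D * a / (c * b)"
      using \<gamma> by (simp_all add: a_def b_def c_def D_def)
    have "\<gamma> > 0" using \<gamma>' a b c D by simp
    then have "\<gamma> * ?S \<le> \<omega>_range + \<gamma>\<^sup>2 * real N * ?Sg / \<mu>" by (intro smd_expected_bound) simp
    with \<open>\<gamma> > 0\<close> have "?S \<le> \<omega>_range / \<gamma> + \<gamma> * real N * ?Sg / \<mu>"
      by (simp add: field_simps power2_eq_square)
    also have "\<dots> = real N * ?R"
      using stepsize_balance[OF a(2) b(2) c(2) D(2)] \<mu>_pos \<open>\<gamma> > 0\<close> b(2) c(2)
      unfolding a(1) b(1) c(1) D(1) \<gamma>'[symmetric] R by (simp add: field_simps)
    finally show ?thesis .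
  qed
qed

lemma dist_powr_le_gap:
  assumes "\<rho> > 1" "unif_convex_on X nrm f \<rho> \<mu>f"
  shows "\<mu>f * nrm (iter k w - xs) powr \<rho> \<le> gap k w"
  using unif_convex_minimizer_ineq[OF X(4) assms(2,1) iter_in_X xs] f'_sub iter_in_X
  by (simp add: gap_def)

lemma dist_powr_average_le:
  assumes N: "N \<ge> 1" and \<rho>: "\<rho> \<ge> 2" and \<mu>f: "\<mu>f > 0" and f_unif: "unif_convex_on X nrm f \<rho> \<mu>f"
  shows "nrm ((1 / real N) *\<^sub>R (\<Sum>k<N. iter k w) - xs) powr \<rho> \<le> (1 / (real N * \<mu>f)) * (\<Sum>k<N. gap k w)"
proof -
  have Np: "real N > 0" using N by simp
  let ?r = "\<lambda>k. nrm (iter k w - xs)"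
  have "(1 / real N) *\<^sub>R (\<Sum>k<N. iter k w) - xs = (1 / real N) *\<^sub>R (\<Sum>k<N. iter k w - xs)"
    using Np by (simp add: sum_subtractf scaleR_diff_right sum_constant_scaleR)
  then have "nrm ((1 / real N) *\<^sub>R (\<Sum>k<N. iter k w) - xs) \<le> (1 / real N) * (\<Sum>k<N. ?r k)"
    using Np nrm_sum_le[of "{..<N}" "\<lambda>k. iter k w - xs"] by (simp add: nrm_scaleR divide_right_mono)
  then have "nrm ((1 / real N) *\<^sub>R (\<Sum>k<N. iter k w) - xs) powr \<rho> \<le> ((1 / real N) * (\<Sum>k<N. ?r k)) powr \<rho>"
    using \<rho> by (intro powr_mono2) auto
  also have "\<dots> \<le> (1 / real N) * (\<Sum>k<N. ?r k powr \<rho>)" by (rule powr_average_le) (use N \<rho> in auto)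
  also have "\<dots> \<le> (1 / real N) * (\<Sum>k<N. gap k w / \<mu>f)"
    using dist_powr_le_gap[OF _ f_unif] \<rho> \<mu>f Np by (intro mult_left_mono sum_mono) (auto simp: field_simps)
  also have "\<dots> = (1 / (real N * \<mu>f)) * (\<Sum>k<N. gap k w)" by (simp add: sum_divide_distrib[symmetric])
  finally show ?thesis .
qed

lemma expected_dist_powr:
  assumes N: "N \<ge> 1" and \<rho>: "\<rho> \<ge> 2" and \<mu>f: "\<mu>f > 0" and f_unif: "unif_convex_on X nrm f \<rho> \<mu>f"
    and gap_sum: "(\<Sum>k<N. \<integral>w. gap k w \<partial>M) \<le> real N * R"
  shows "(\<integral>\<^sup>+ w. ennreal (nrm ((1 / real N) *\<^sub>R (\<Sum>k<N. iter k w) - xs) powr \<rho>) \<partial>M) \<le> ennreal (R / \<mu>f)"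
proof -
  have Np: "real N > 0" using N by simp
  have "(\<integral>\<^sup>+ w. ennreal (nrm ((1 / real N) *\<^sub>R (\<Sum>k<N. iter k w) - xs) powr \<rho>) \<partial>M)
      \<le> (\<integral>\<^sup>+ w. ennreal ((1 / (real N * \<mu>f)) * (\<Sum>k<N. gap k w)) \<partial>M)"
    by (intro nn_integral_mono ennreal_leI dist_powr_average_le[OF N \<rho> \<mu>f f_unif])
  also have "\<dots> = ennreal (\<integral>w. (1 / (real N * \<mu>f)) * (\<Sum>k<N. gap k w) \<partial>M)"
    using gap_integrable gap_nonneg \<mu>f Np
    by (intro nn_integral_eq_integral) (auto intro!: AE_I2 sum_nonneg divide_nonneg_nonneg)
  also have "(\<integral>w. (1 / (real N * \<mu>f)) * (\<Sum>k<N. gap k w) \<partial>M) = (1 / (real N * \<mu>f)) * (\<Sum>k<N. \<integral>w. gap k w \<partial>M)"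
    using gap_integrable by (simp add: Bochner_Integration.integral_sum)
  also have "\<dots> \<le> (1 / (real N * \<mu>f)) * (real N * R)" using gap_sum Np \<mu>f by (intro mult_left_mono) auto
  also have "\<dots> = R / \<mu>f" using Np by simp
  finally show ?thesis by (simp add: ennreal_leI)
qed

lemma abs_value_error_le:
  assumes N: "N \<ge> 1"
  shows "\<bar>(1 / real N) * (\<Sum>k<N. g (iter k w) (\<xi> (Suc k) w)) - f xs\<bar>
      \<le> (1 / real N) * \<bar>\<Sum>k<N. value_noise k w\<bar> + (1 / real N) * (\<Sum>k<N. gap k w)"
proof -
  have Np: "real N > 0" using N by simp
  let ?A = "(1 / real N) * (\<Sum>k<N. value_noise k w)" and ?B = "(1 / real N) * (\<Sum>k<N. f (iter k w) - f xs)"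
  have "g (iter k w) (\<xi> (Suc k) w) - f xs = value_noise k w + (f (iter k w) - f xs)" for k
    by (simp add: value_noise_def mean_value_eq iter_in_X)
  then have "(1 / real N) * (\<Sum>k<N. g (iter k w) (\<xi> (Suc k) w)) - f xs = ?A + ?B"
    using Np by (simp add: sum.distrib sum_subtractf field_simps)
  moreover have "0 \<le> ?B" using xs iter_in_X Np by (intro mult_nonneg_nonneg sum_nonneg) auto
  moreover have "?B \<le> (1 / real N) * (\<Sum>k<N. gap k w)"
    using Np by (intro mult_left_mono sum_mono value_gap_le_gap) auto
  moreover have "\<bar>?A\<bar> = (1 / real N) * \<bar>\<Sum>k<N. value_noise k w\<bar>" using Np by (simp add: abs_mult)
  ultimately show ?thesis using abs_triangle_ineq[of ?A ?B] by linarith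
qed

lemma expected_abs_value_error:
  assumes N: "N \<ge> 1" and gap_sum: "(\<Sum>k<N. \<integral>w. gap k w \<partial>M) \<le> real N * R"
  shows "(\<integral>\<^sup>+ w. ennreal \<bar>(1 / real N) * (\<Sum>k<N. g (iter k w) (\<xi> (Suc k) w)) - f xs\<bar> \<partial>M)
      \<le> ennreal (M1 / sqrt (real N) + R)"
proof -
  have Np: "real N > 0" using N by simp
  define T where "T w = (1 / real N) * \<bar>\<Sum>k<N. value_noise k w\<bar> + (1 / real N) * (\<Sum>k<N. gap k w)" for w
  have "(\<integral>\<^sup>+ w. ennreal \<bar>(1 / real N) * (\<Sum>k<N. g (iter k w) (\<xi> (Suc k) w)) - f xs\<bar> \<partial>M)
      \<le> (\<integral>\<^sup>+ w. ennreal (T w) \<partial>M)"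
    unfolding T_def by (intro nn_integral_mono ennreal_leI abs_value_error_le[OF N])
  also have "\<dots> = ennreal (\<integral>w. T w \<partial>M)"
    using gap_integrable value_noise_integrable gap_nonneg Np unfolding T_def
    by (intro nn_integral_eq_integral) (auto intro!: AE_I2 sum_nonneg add_nonneg_nonneg divide_nonneg_nonneg)
  also have "(\<integral>w. T w \<partial>M)
      = (1 / real N) * (\<integral>w. \<bar>\<Sum>k<N. value_noise k w\<bar> \<partial>M) + (1 / real N) * (\<Sum>k<N. \<integral>w. gap k w \<partial>M)"
    unfolding T_def using gap_integrable value_noise_integrable by (simp add: Bochner_Integration.integral_sum)
  also have "\<dots> \<le> (1 / real N) * (sqrt (real N) * M1) + (1 / real N) * (real N * R)"
    using value_noise_sum_abs_expectation[of N] gap_sum Np by (intro add_mono mult_left_mono) auto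
  also have "\<dots> = M1 / sqrt (real N) + R"
    using Np real_sqrt_mult_self[of "real N"] by (simp add: field_simps)
  finally show ?thesis by (simp add: ennreal_leI)
qed

end

theorem lemma6:
  fixes M :: "'w measure" and P :: "'b measure"
    and \<xi> :: "nat \<Rightarrow> 'w \<Rightarrow> 'b"
    and X :: "'a::euclidean_space set" and nrm :: "'a \<Rightarrow> real"
    and \<omega> :: "'a \<Rightarrow> real" and \<omega>' :: "'a \<Rightarrow> 'a" and \<mu>\<omega> :: real and x\<omega> :: 'a
    and g :: "'a \<Rightarrow> 'b \<Rightarrow> real" and G :: "'a \<Rightarrow> 'b \<Rightarrow> 'a"
    and f :: "'a \<Rightarrow> real" and f' :: "'a \<Rightarrow> 'a"
    and L M1 M2 \<rho> \<mu>f :: real and xs :: 'a and N :: nat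
  assumes
    \<comment> \<open>proximal setup\<close>
    norm: "is_norm nrm"
    and X: "X \<noteq> {}" "closed X" "bounded X" "convex X"
    and \<omega>_conv: "convex_on X \<omega>" and \<omega>_cont: "continuous_on X \<omega>"
    and \<omega>'_sub: "\<forall>x\<in>subdiff_dom X \<omega>. is_subgrad X \<omega> x (\<omega>' x)"
    and \<omega>'_cont: "continuous_on (subdiff_dom X \<omega>) \<omega>'"
    and \<mu>\<omega>_pos: "\<mu>\<omega> > 0" and \<omega>_strong: "strongly_convex_on X nrm \<omega> \<mu>\<omega>"
    and x\<omega>: "x\<omega> \<in> X" "\<forall>y\<in>X. \<omega> x\<omega> \<le> \<omega> y"
    \<comment> \<open>stochastic problem and oracle\<close>
    and prob: "prob_space M"
    and \<xi>_meas: "\<forall>t\<ge>1. \<xi> t \<in> measurable M P"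
    and \<xi>_dist: "\<forall>t\<ge>1. distr M P (\<xi> t) = P"
    and \<xi>_indep: "prob_space.indep_vars M (\<lambda>_. P) \<xi> {1..}"
    and g_meas: "(\<lambda>(x, z). g x z) \<in> borel_measurable (borel \<Otimes>\<^sub>M P)"
    and g_conv: "\<forall>z\<in>space P. convex_on X (\<lambda>x. g x z)"
    and G_meas: "(\<lambda>(x, z). G x z) \<in> borel_measurable (borel \<Otimes>\<^sub>M P)"
    and G_sub: "\<forall>x\<in>X. \<forall>z\<in>space P. is_subgrad X (\<lambda>y. g y z) x (G x z)"
    and f_conv: "convex_on X f" and f_lip: "\<exists>K. K-lipschitz_on X f"
    \<comment> \<open>Assumption 2\<close>
    and f_def: "\<forall>x\<in>X. integrable P (g x) \<and> f x = (\<integral>z. g x z \<partial>P)"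
    and f'_def: "\<forall>x\<in>X. integrable P (G x) \<and> f' x = (\<integral>z. G x z \<partial>P)"
    and f'_sub: "\<forall>x\<in>X. is_subgrad X f x (f' x)"
    \<comment> \<open>Assumption 1\<close>
    and A1: "\<forall>x\<in>X. dual_norm nrm (f' x) \<le> L"
    \<comment> \<open>Assumption 3\<close>
    and M_nonneg: "L \<ge> 0" "M1 \<ge> 0" "M2 \<ge> 0"
    and A3a: "\<forall>x\<in>X. (\<integral>\<^sup>+ z. ennreal ((g x z - f x)\<^sup>2) \<partial>P) \<le> ennreal (M1\<^sup>2)"
    and A3b: "\<forall>x\<in>X. (\<integral>\<^sup>+ z. ennreal ((dual_norm nrm (G x z - f' x))\<^sup>2) \<partial>P) \<le> ennreal (M2\<^sup>2)"
    \<comment> \<open>uniform convexity of f and its minimizer\<close>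
    and \<rho>: "\<rho> \<ge> 2" and \<mu>f_pos: "\<mu>f > 0" and f_unif: "unif_convex_on X nrm f \<rho> \<mu>f"
    and xs: "xs \<in> X" "\<forall>y\<in>X. f xs \<le> f y"
    and N: "N \<ge> 1"
  shows
    "let D = sqrt (2 * (Sup (\<omega> ` X) - Inf (\<omega> ` X)));
         \<gamma> = D * sqrt \<mu>\<omega> / (sqrt (2 * (M2\<^sup>2 + L\<^sup>2)) * sqrt (real N));
         x = (\<lambda>\<tau> w. smd X \<omega> \<omega>' \<gamma> G x\<omega> \<xi> (\<tau> - 1) w);
         xN = (\<lambda>w. (1 / real N) *\<^sub>R (\<Sum>\<tau>=1..N. x \<tau> w));
         gN = (\<lambda>w. (1 / real N) * (\<Sum>\<tau>=1..N. g (x \<tau> w) (\<xi> \<tau> w)))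
     in (\<integral>\<^sup>+ w. ennreal \<bar>gN w - f xs\<bar> \<partial>M)
          \<le> ennreal ((M1 + D / sqrt \<mu>\<omega> * sqrt (2 * (M2\<^sup>2 + L\<^sup>2))) / sqrt (real N))
      \<and> (\<integral>\<^sup>+ w. ennreal (nrm (xN w - xs) powr \<rho>) \<partial>M)
          \<le> ennreal (D * sqrt (2 * (M2\<^sup>2 + L\<^sup>2)) / (\<mu>f * sqrt \<mu>\<omega> * sqrt (real N)))"
proof -
  define D where "D = sqrt (2 * (Sup (\<omega> ` X) - Inf (\<omega> ` X)))"
  define \<gamma> where "\<gamma> = D * sqrt \<mu>\<omega> / (sqrt (2 * (M2\<^sup>2 + L\<^sup>2)) * sqrt (real N))"
  define R where "R = D * sqrt (2 * (M2\<^sup>2 + L\<^sup>2)) / (sqrt \<mu>\<omega> * sqrt (real N))"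
  interpret smd_setting nrm X \<omega> \<omega>' \<mu>\<omega> M P \<xi> g G f f' L M1 M2 \<gamma> x\<omega> xs
    by (intro smd_setting.intro prox_setup.intro abstract_norm.intro prox_setup_axioms.intro
        smd_setting_axioms.intro) (use assms in auto)
  have gap_sum: "(\<Sum>k<N. \<integral>w. gap k w \<partial>M) \<le> real N * R"
    using expected_gap_sum_bound[OF N] by (simp add: \<gamma>_def R_def D_def \<omega>_range_def)
  have "M1 / sqrt (real N) + R = (M1 + D / sqrt \<mu>\<omega> * sqrt (2 * (M2\<^sup>2 + L\<^sup>2))) / sqrt (real N)"
    by (simp add: R_def add_divide_distrib)
  moreover have "R / \<mu>f = D * sqrt (2 * (M2\<^sup>2 + L\<^sup>2)) / (\<mu>f * sqrt \<mu>\<omega> * sqrt (real N))"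
    by (simp add: R_def field_simps)
  ultimately show ?thesis
    using expected_abs_value_error[OF N gap_sum] expected_dist_powr[OF N \<rho> \<mu>f_pos f_unif gap_sum]
    unfolding Let_def D_def[symmetric] \<gamma>_def[symmetric] iter_def[symmetric] sum_bounds_lt_plus1[symmetric]
    by simp
qed

end
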